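(* Let $k$ be a field and $\mathsf{E}$ a locally finite $k$-linear category. Then the contravariant functor $\mathcal{N}\mapsto\mathcal{N}^*=\operatorname{Hom}_k(\mathcal{N},k)$ from the category of locally finite right $\mathcal{C}_\mathsf{E}$-comodules to the category of locally finite left $\mathcal{C}_\mathsf{E}$-contramodules is fully faithful; i.e., for locally finite right $\mathcal{C}_\mathsf{E}$-comodules $\mathcal{M},\mathcal{N}$, the map $f\mapsto f^*$ is a bijection from comodule morphisms $\mathcal{M}\to\mathcal{N}$ to contramodule morphisms $\mathcal{N}^*\to\mathcal{M}^*$.
   Context: A small $k$-linear category $\mathsf{E}$ has finite-or-not $k$-vector spaces $\operatorname{Hom}_\mathsf{E}(x,y)$, $k$-bilinear associative composition and identities with $\mathrm{id}_x\ne0$. Write $x\preceq y$ if there are $n\ge1$ and objects $x=z_0,\dots,z_n=y$ with $\operatorname{Hom}_\mathsf{E}(z_{i-1},z_i)\neq0$ for all $i$. $\mathsf{E}$ is locally finite if all $\operatorname{Hom}_\mathsf{E}(x,y)$ are finite-dimensional and every $\{z:x\preceq z\preceq y\}$ is finite. $\mathcal{C}_\mathsf{E}=\bigoplus_{x,y}\mathcal{C}^{x,y}$, $\mathcal{C}^{x,y}=\operatorname{Hom}_\mathsf{E}(x,y)^*$; counit zero on $\mathcal{C}^{x,y}$ for $x\ne y$, evaluation at $\mathrm{id}_x$ on $\mathcal{C}^{x,x}$; comultiplication $\mathcal{C}^{x,y}\to\bigoplus_z\mathcal{C}^{x,z}\otimes\mathcal{C}^{z,y}$ dual to composition $g\otimes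 h\mapsto hg$. Let $e_x\in\mathcal{C}_\mathsf{E}^*$ be evaluation at $\mathrm{id}_x$ on $\mathcal{C}^{x,x}$ and zero elsewhere. A right comodule is $(\mathcal{N},\nu:\mathcal{N}\to\mathcal{N}\otimes_k\mathcal{C}_\mathsf{E})$ coassociative and counital; for $\varphi\in\mathcal{C}_\mathsf{E}^*$ put $\varphi\cdot n=(\mathrm{id}\otimes\varphi)\nu(n)$. One has $\mathcal{N}=\bigoplus_xe_x\cdot\mathcal{N}$; $\mathcal{N}$ is locally finite if each $e_x\cdot\mathcal{N}$ is finite-dimensional. A left contramodule over a coalgebra $(\mathcal{C},\mu,\epsilon)$ is a space $\mathfrak{P}$ with $\pi:\operatorname{Hom}_k(\mathcal{C},\mathfrak{P})\to\mathfrak{P}$ such that $\pi(c\mapsto\epsilon(c)p)=p$ and, under $\operatorname{Hom}_k(\mathcal{C},\operatorname{Hom}_k(\mathcal{C},\mathfrak{P}))\cong\operatorname{Hom}_k(\mathcal{C}\otimes\mathcal{C},\mathfrak{P})$, $f\mapsto(c'\otimes c''\mapsto f(c'')(c'))$, $\pi(c\mapsto\pi(f(c)))=\pi(f\circ\mu)$; morphisms commute with $\pi$. For $\varphi\in\mathcal{C}^*$ set $\varphi\cdot p=\pi(c\mapsto\varphi(c)p)$. For a left $\mathcal{C}_\mathsf{E}$-contramodule, $\mathfrak{P}\cong\prod_xe_x\cdot\mathfrak{P}$, and $\mathfrak{P}$ is locally finite if each $e_x\cdot\mathfrak{P}$ is finite-dimensional. For a right comodule $\mathcal{N}$, $\mathcal{N}^*$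 is a left contramodule with $\pi(g)(n)=\sum_ig(c_i)(n_i)$ where $\nu(n)=\sum_in_i\otimes c_i$. *)

theory Defs
  imports Main "HOL-Library.Function_Algebras"
begin

definition vs_axioms :: "('k::field \<Rightarrow> 'v::ab_group_add \<Rightarrow> 'v) \<Rightarrow> bool" where
  "vs_axioms s \<longleftrightarrow> (\<forall>a x y. s a (x + y) = s a x + s a y) \<and> (\<forall>a b x. s (a + b) x = s a x + s b x)
     \<and> (\<forall>a b x. s a (s b x) = s (a * b) x) \<and> (\<forall>x. s 1 x = x)"

definition is_space :: "('k::field \<Rightarrow> 'v::ab_group_add \<Rightarrow> 'v) \<Rightarrow> 'v set \<Rightarrow> bool" where
  "is_space s V \<longleftrightarrow> vs_axioms s \<and> 0 \<in> V \<and> (\<forall>x\<in>V. \<forall>y\<in>V. x + y \<in> V) \<and> (\<forall>a. \<forall>x\<in>V. s a x \<in> V)"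

definition linear_on :: "('k::field \<Rightarrow> 'v::ab_group_add \<Rightarrow> 'v) \<Rightarrow> 'v set
    \<Rightarrow> ('k \<Rightarrow> 'w::ab_group_add \<Rightarrow> 'w) \<Rightarrow> 'w set \<Rightarrow> ('v \<Rightarrow> 'w) \<Rightarrow> bool" where
  "linear_on s1 V s2 W f \<longleftrightarrow> (\<forall>x\<in>V. f x \<in> W) \<and> (\<forall>x\<in>V. \<forall>y\<in>V. f (x + y) = f x + f y)
     \<and> (\<forall>a. \<forall>x\<in>V. f (s1 a x) = s2 a (f x))"

definition lin_maps :: "('k::field \<Rightarrow> 'v::ab_group_add \<Rightarrow> 'v) \<Rightarrow> 'v set
    \<Rightarrow> ('k \<Rightarrow> 'w::ab_group_add \<Rightarrow> 'w) \<Rightarrow> 'w set \<Rightarrow> ('v \<Rightarrow> 'w) set" where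
  "lin_maps s1 V s2 W = {f. linear_on s1 V s2 W f \<and> (\<forall>x. x \<notin> V \<longrightarrow> f x = 0)}"

definition fscale :: "('k \<Rightarrow> 'w \<Rightarrow> 'w) \<Rightarrow> 'k \<Rightarrow> ('v \<Rightarrow> 'w) \<Rightarrow> 'v \<Rightarrow> 'w" where
  "fscale s a f = (\<lambda>x. s a (f x))"

definition lin_span :: "('k::field \<Rightarrow> 'v::ab_group_add \<Rightarrow> 'v) \<Rightarrow> 'v set \<Rightarrow> 'v set" where
  "lin_span s B = {v. \<exists>a. v = (\<Sum>b\<in>B. s (a b) b)}"

definition fin_dim :: "('k::field \<Rightarrow> 'v::ab_group_add \<Rightarrow> 'v) \<Rightarrow> 'v set \<Rightarrow> bool" where
  "fin_dim s V \<longleftrightarrow> (\<exists>B. finite B \<and> B \<subseteq> V \<and> V = lin_span s B)"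

definition dual :: "('k::field \<Rightarrow> 'v::ab_group_add \<Rightarrow> 'v) \<Rightarrow> 'v set \<Rightarrow> ('v \<Rightarrow> 'k) set" where
  "dual s V = lin_maps s V (*) UNIV"

section \<open>Tensor products: formal sums modulo the multilinearity relations\<close>

definition delta :: "'a \<Rightarrow> 'a \<Rightarrow> 'k::field" where
  "delta p = (\<lambda>q. if q = p then 1 else 0)"

definition free :: "'a list \<Rightarrow> 'a \<Rightarrow> 'k::field" where
  "free xs = (\<lambda>q. of_nat (count_list xs q))"

definition fspan :: "('a \<Rightarrow> 'k::field) set \<Rightarrow> ('a \<Rightarrow> 'k) set" where
  "fspan G = {d. \<exists>F a. finite F \<and> F \<subseteq> G \<and> d = (\<lambda>q. \<Sum>g\<in>F. a g * g q)}"

definition rel2 :: "('k::field \<Rightarrow> 'v::ab_group_add \<Rightarrow> 'v) \<Rightarrow> 'v set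
    \<Rightarrow> ('k \<Rightarrow> 'w::ab_group_add \<Rightarrow> 'w) \<Rightarrow> 'w set \<Rightarrow> ('v \<times> 'w \<Rightarrow> 'k) set" where
  "rel2 sV V sW W =
     {delta (x + x', y) - delta (x, y) - delta (x', y) | x x' y. x \<in> V \<and> x' \<in> V \<and> y \<in> W} \<union>
     {delta (x, y + y') - delta (x, y) - delta (x, y') | x y y'. x \<in> V \<and> y \<in> W \<and> y' \<in> W} \<union>
     {delta (sV a x, y) - (\<lambda>q. a * delta (x, y) q) | a x y. x \<in> V \<and> y \<in> W} \<union>
     {delta (x, sW a y) - (\<lambda>q. a * delta (x, y) q) | a x y. x \<in> V \<and> y \<in> W}"

text \<open>Equality of two formal sums (lists of pure tensors) in V \<otimes> W.\<close>
definition teq2 :: "('k::field \<Rightarrow> 'v::ab_group_add \<Rightarrow> 'v) \<Rightarrow> 'v set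
    \<Rightarrow> ('k \<Rightarrow> 'w::ab_group_add \<Rightarrow> 'w) \<Rightarrow> 'w set \<Rightarrow> ('v \<times> 'w) list \<Rightarrow> ('v \<times> 'w) list \<Rightarrow> bool" where
  "teq2 sV V sW W xs ys \<longleftrightarrow> set xs \<subseteq> V \<times> W \<and> set ys \<subseteq> V \<times> W \<and>
     (free xs - free ys :: 'v \<times> 'w \<Rightarrow> 'k) \<in> fspan (rel2 sV V sW W)"

definition rel3 :: "('k::field \<Rightarrow> 'u::ab_group_add \<Rightarrow> 'u) \<Rightarrow> 'u set
    \<Rightarrow> ('k \<Rightarrow> 'v::ab_group_add \<Rightarrow> 'v) \<Rightarrow> 'v set
    \<Rightarrow> ('k \<Rightarrow> 'w::ab_group_add \<Rightarrow> 'w) \<Rightarrow> 'w set \<Rightarrow> ('u \<times> 'v \<times> 'w \<Rightarrow> 'k) set" where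
  "rel3 sU U sV V sW W =
     {delta (x + x', y, z) - delta (x, y, z) - delta (x', y, z) | x x' y z. x \<in> U \<and> x' \<in> U \<and> y \<in> V \<and> z \<in> W} \<union>
     {delta (x, y + y', z) - delta (x, y, z) - delta (x, y', z) | x y y' z. x \<in> U \<and> y \<in> V \<and> y' \<in> V \<and> z \<in> W} \<union>
     {delta (x, y, z + z') - delta (x, y, z) - delta (x, y, z') | x y z z'. x \<in> U \<and> y \<in> V \<and> z \<in> W \<and> z' \<in> W} \<union>
     {delta (sU a x, y, z) - (\<lambda>q. a * delta (x, y, z) q) | a x y z. x \<in> U \<and> y \<in> V \<and> z \<in> W} \<union>
     {delta (x, sV a y, z) - (\<lambda>q. a * delta (x, y, z) q) | a x y z. x \<in> U \<and> y \<in> V \<and> z \<in> W} \<union>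
     {delta (x, y, sW a z) - (\<lambda>q. a * delta (x, y, z) q) | a x y z. x \<in> U \<and> y \<in> V \<and> z \<in> W}"

definition teq3 :: "('k::field \<Rightarrow> 'u::ab_group_add \<Rightarrow> 'u) \<Rightarrow> 'u set
    \<Rightarrow> ('k \<Rightarrow> 'v::ab_group_add \<Rightarrow> 'v) \<Rightarrow> 'v set
    \<Rightarrow> ('k \<Rightarrow> 'w::ab_group_add \<Rightarrow> 'w) \<Rightarrow> 'w set
    \<Rightarrow> ('u \<times> 'v \<times> 'w) list \<Rightarrow> ('u \<times> 'v \<times> 'w) list \<Rightarrow> bool" where
  "teq3 sU U sV V sW W xs ys \<longleftrightarrow> set xs \<subseteq> U \<times> V \<times> W \<and> set ys \<subseteq> U \<times> V \<times> W \<and>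
     (free xs - free ys :: 'u \<times> 'v \<times> 'w \<Rightarrow> 'k) \<in> fspan (rel3 sU U sV V sW W)"

text \<open>Objects: the type 'o.  Hom x y: a subspace of the type 'h.
  cmp x z y g h = h \<circ> g for g : x \<rightarrow> z, h : z \<rightarrow> y.  idm x = identity of x.\<close>
definition klin_cat :: "('k::field \<Rightarrow> 'h::ab_group_add \<Rightarrow> 'h) \<Rightarrow> ('o \<Rightarrow> 'o \<Rightarrow> 'h set)
    \<Rightarrow> ('o \<Rightarrow> 'o \<Rightarrow> 'o \<Rightarrow> 'h \<Rightarrow> 'h \<Rightarrow> 'h) \<Rightarrow> ('o \<Rightarrow> 'h) \<Rightarrow> bool" where
  "klin_cat s Hom cmp idm \<longleftrightarrow>
     (\<forall>x y. is_space s (Hom x y)) \<and>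
     (\<forall>x z y g h. g \<in> Hom x z \<longrightarrow> h \<in> Hom z y \<longrightarrow> cmp x z y g h \<in> Hom x y) \<and>
     (\<forall>x z y g g' h. g \<in> Hom x z \<longrightarrow> g' \<in> Hom x z \<longrightarrow> h \<in> Hom z y \<longrightarrow>
        cmp x z y (g + g') h = cmp x z y g h + cmp x z y g' h) \<and>
     (\<forall>x z y g h h'. g \<in> Hom x z \<longrightarrow> h \<in> Hom z y \<longrightarrow> h' \<in> Hom z y \<longrightarrow>
        cmp x z y g (h + h') = cmp x z y g h + cmp x z y g h') \<and>
     (\<forall>x z y a g h. g \<in> Hom x z \<longrightarrow> h \<in> Hom z y \<longrightarrow>
        cmp x z y (s a g) h = s a (cmp x z y g h) \<and> cmp x z y g (s a h) = s a (cmp x z y g h)) \<and>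
     (\<forall>w x y z f g h. f \<in> Hom w x \<longrightarrow> g \<in> Hom x y \<longrightarrow> h \<in> Hom y z \<longrightarrow>
        cmp w y z (cmp w x y f g) h = cmp w x z f (cmp x y z g h)) \<and>
     (\<forall>x. idm x \<in> Hom x x \<and> idm x \<noteq> 0) \<and>
     (\<forall>x y h. h \<in> Hom x y \<longrightarrow> cmp x x y (idm x) h = h \<and> cmp x y y h (idm y) = h)"

definition preceq :: "('o \<Rightarrow> 'o \<Rightarrow> 'h::zero set) \<Rightarrow> 'o \<Rightarrow> 'o \<Rightarrow> bool" where
  "preceq Hom = (\<lambda>x y. Hom x y \<noteq> {0})\<^sup>+\<^sup>+"

definition loc_fin_cat :: "('k::field \<Rightarrow> 'h::ab_group_add \<Rightarrow> 'h) \<Rightarrow> ('o \<Rightarrow> 'o \<Rightarrow> 'h set) \<Rightarrow> bool" where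
  "loc_fin_cat s Hom \<longleftrightarrow> (\<forall>x y. fin_dim s (Hom x y)) \<and>
     (\<forall>x y. finite {z. preceq Hom x z \<and> preceq Hom z y})"

text \<open>An element c of C_E = \<Oplus>_{x,y} Hom(x,y)^* is a family c x y \<in> Hom(x,y)^*,
  nonzero for only finitely many (x,y).\<close>
definition CE :: "('k::field \<Rightarrow> 'h::ab_group_add \<Rightarrow> 'h) \<Rightarrow> ('o \<Rightarrow> 'o \<Rightarrow> 'h set)
    \<Rightarrow> ('o \<Rightarrow> 'o \<Rightarrow> 'h \<Rightarrow> 'k) set" where
  "CE s Hom = {c. (\<forall>x y. c x y \<in> dual s (Hom x y)) \<and> finite {(x, y). c x y \<noteq> 0}}"

definition cscale :: "'k::field \<Rightarrow> ('o \<Rightarrow> 'o \<Rightarrow> 'h \<Rightarrow> 'k) \<Rightarrow> 'o \<Rightarrow> 'o \<Rightarrow> 'h \<Rightarrow> 'k" where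
  "cscale a c = (\<lambda>x y h. a * c x y h)"

definition counit :: "('o \<Rightarrow> 'h) \<Rightarrow> ('o \<Rightarrow> 'o \<Rightarrow> 'h \<Rightarrow> 'k::field) \<Rightarrow> 'k" where
  "counit idm c = (\<Sum>x\<in>{x. c x x \<noteq> 0}. c x x (idm x))"

definition ev_id :: "('o \<Rightarrow> 'h) \<Rightarrow> 'o \<Rightarrow> ('o \<Rightarrow> 'o \<Rightarrow> 'h \<Rightarrow> 'k::field) \<Rightarrow> 'k" where
  "ev_id idm x c = c x x (idm x)"

text \<open>A formal sum xs of pure tensors c' \<otimes> c'' represents the comultiplication of c iff it
  is dual to composition: its pairing with g \<otimes> h (g \<in> Hom(x,z), h \<in> Hom(w,y)) is c(hg)
  when z = w (i.e. the value of c on the composite), and 0 when z \<noteq> w (no components outside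
  \<Oplus>_z C^{x,z} \<otimes> C^{z,y}).\<close>
definition comult_rep :: "('o \<Rightarrow> 'o \<Rightarrow> 'h set) \<Rightarrow> ('o \<Rightarrow> 'o \<Rightarrow> 'o \<Rightarrow> 'h \<Rightarrow> 'h \<Rightarrow> 'h)
    \<Rightarrow> ('o \<Rightarrow> 'o \<Rightarrow> 'h \<Rightarrow> 'k::field)
    \<Rightarrow> (('o \<Rightarrow> 'o \<Rightarrow> 'h \<Rightarrow> 'k) \<times> ('o \<Rightarrow> 'o \<Rightarrow> 'h \<Rightarrow> 'k)) list \<Rightarrow> bool" where
  "comult_rep Hom cmp c xs \<longleftrightarrow>
     (\<forall>x z w y g h. g \<in> Hom x z \<longrightarrow> h \<in> Hom w y \<longrightarrow>
        sum_list (map (\<lambda>(c', c''). c' x z g * c'' w y h) xs)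
          = (if z = w then c x y (cmp x z y g h) else 0))"

definition comult :: "('k::field \<Rightarrow> 'h::ab_group_add \<Rightarrow> 'h) \<Rightarrow> ('o \<Rightarrow> 'o \<Rightarrow> 'h set)
    \<Rightarrow> ('o \<Rightarrow> 'o \<Rightarrow> 'o \<Rightarrow> 'h \<Rightarrow> 'h \<Rightarrow> 'h) \<Rightarrow> ('o \<Rightarrow> 'o \<Rightarrow> 'h \<Rightarrow> 'k)
    \<Rightarrow> (('o \<Rightarrow> 'o \<Rightarrow> 'h \<Rightarrow> 'k) \<times> ('o \<Rightarrow> 'o \<Rightarrow> 'h \<Rightarrow> 'k)) list" where
  "comult s Hom cmp c = (SOME xs. set xs \<subseteq> CE s Hom \<times> CE s Hom \<and> comult_rep Hom cmp c xs)"

text \<open>The coaction \<nu> : N \<rightarrow> N \<otimes> C_E is given by a representing formal sum nu n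
  for every n; phi \<cdot> n = (id \<otimes> phi)(\<nu> n).\<close>
definition coact :: "('k::field \<Rightarrow> 'n::ab_group_add \<Rightarrow> 'n) \<Rightarrow> ('n \<Rightarrow> ('n \<times> 'c) list)
    \<Rightarrow> ('c \<Rightarrow> 'k) \<Rightarrow> 'n \<Rightarrow> 'n" where
  "coact sN nu phi n = sum_list (map (\<lambda>(m, c). sN (phi c) m) (nu n))"

definition rcomod :: "('k::field \<Rightarrow> 'h::ab_group_add \<Rightarrow> 'h) \<Rightarrow> ('o \<Rightarrow> 'o \<Rightarrow> 'h set)
    \<Rightarrow> ('o \<Rightarrow> 'o \<Rightarrow> 'o \<Rightarrow> 'h \<Rightarrow> 'h \<Rightarrow> 'h) \<Rightarrow> ('o \<Rightarrow> 'h)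
    \<Rightarrow> ('k \<Rightarrow> 'n::ab_group_add \<Rightarrow> 'n) \<Rightarrow> 'n set
    \<Rightarrow> ('n \<Rightarrow> ('n \<times> ('o \<Rightarrow> 'o \<Rightarrow> 'h \<Rightarrow> 'k)) list) \<Rightarrow> bool" where
  "rcomod s Hom cmp idm sN N nu \<longleftrightarrow>
     is_space sN N \<and>
     (\<forall>n\<in>N. set (nu n) \<subseteq> N \<times> CE s Hom) \<and>
     (\<forall>a. \<forall>n\<in>N. \<forall>n'\<in>N. teq2 sN N cscale (CE s Hom) (nu (sN a n + n'))
        (map (\<lambda>(m, c). (sN a m, c)) (nu n) @ nu n')) \<and>
     (\<forall>n\<in>N. teq3 sN N cscale (CE s Hom) cscale (CE s Hom)
        (concat (map (\<lambda>(m, c). map (\<lambda>(m', c'). (m', c', c)) (nu m)) (nu n)))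
        (concat (map (\<lambda>(m, c). map (\<lambda>(c', c''). (m, c', c'')) (comult s Hom cmp c)) (nu n)))) \<and>
     (\<forall>n\<in>N. coact sN nu (counit idm) n = n)"

definition lf_rcomod :: "('k::field \<Rightarrow> 'h::ab_group_add \<Rightarrow> 'h) \<Rightarrow> ('o \<Rightarrow> 'o \<Rightarrow> 'h set)
    \<Rightarrow> ('o \<Rightarrow> 'o \<Rightarrow> 'o \<Rightarrow> 'h \<Rightarrow> 'h \<Rightarrow> 'h) \<Rightarrow> ('o \<Rightarrow> 'h)
    \<Rightarrow> ('k \<Rightarrow> 'n::ab_group_add \<Rightarrow> 'n) \<Rightarrow> 'n set
    \<Rightarrow> ('n \<Rightarrow> ('n \<times> ('o \<Rightarrow> 'o \<Rightarrow> 'h \<Rightarrow> 'k)) list) \<Rightarrow> bool" where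
  "lf_rcomod s Hom cmp idm sN N nu \<longleftrightarrow> rcomod s Hom cmp idm sN N nu \<and>
     (\<forall>x. fin_dim sN (coact sN nu (ev_id idm x) ` N))"

definition comod_hom :: "('k::field \<Rightarrow> 'h::ab_group_add \<Rightarrow> 'h) \<Rightarrow> ('o \<Rightarrow> 'o \<Rightarrow> 'h set)
    \<Rightarrow> ('k \<Rightarrow> 'm::ab_group_add \<Rightarrow> 'm) \<Rightarrow> 'm set \<Rightarrow> ('m \<Rightarrow> ('m \<times> ('o \<Rightarrow> 'o \<Rightarrow> 'h \<Rightarrow> 'k)) list)
    \<Rightarrow> ('k \<Rightarrow> 'n::ab_group_add \<Rightarrow> 'n) \<Rightarrow> 'n set \<Rightarrow> ('n \<Rightarrow> ('n \<times> ('o \<Rightarrow> 'o \<Rightarrow> 'h \<Rightarrow> 'k)) list)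
    \<Rightarrow> ('m \<Rightarrow> 'n) set" where
  "comod_hom s Hom sM M nuM sN N nuN =
     {f \<in> lin_maps sM M sN N. \<forall>m\<in>M. teq2 sN N cscale (CE s Hom) (nuN (f m))
        (map (\<lambda>(m', c). (f m', c)) (nuM m))}"

definition contra_hom :: "('k::field \<Rightarrow> 'h::ab_group_add \<Rightarrow> 'h) \<Rightarrow> ('o \<Rightarrow> 'o \<Rightarrow> 'h set)
    \<Rightarrow> ('k \<Rightarrow> 'p::ab_group_add \<Rightarrow> 'p) \<Rightarrow> 'p set \<Rightarrow> ((('o \<Rightarrow> 'o \<Rightarrow> 'h \<Rightarrow> 'k) \<Rightarrow> 'p) \<Rightarrow> 'p)
    \<Rightarrow> ('k \<Rightarrow> 'q::ab_group_add \<Rightarrow> 'q) \<Rightarrow> 'q set \<Rightarrow> ((('o \<Rightarrow> 'o \<Rightarrow> 'h \<Rightarrow> 'k) \<Rightarrow> 'q) \<Rightarrow> 'q)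
    \<Rightarrow> ('p \<Rightarrow> 'q) set" where
  "contra_hom s Hom sP P piP sQ Q piQ =
     {F \<in> lin_maps sP P sQ Q. \<forall>g \<in> lin_maps cscale (CE s Hom) sP P. F (piP g) = piQ (F \<circ> g)}"

definition dual_pi :: "'n set \<Rightarrow> ('n \<Rightarrow> ('n \<times> 'c) list) \<Rightarrow> ('c \<Rightarrow> 'n \<Rightarrow> 'k::field) \<Rightarrow> 'n \<Rightarrow> 'k" where
  "dual_pi N nu g = (\<lambda>n. if n \<in> N then sum_list (map (\<lambda>(m, c). g c m) (nu n)) else 0)"

definition dualmap :: "('k::field \<Rightarrow> 'n::ab_group_add \<Rightarrow> 'n) \<Rightarrow> 'n set \<Rightarrow> 'm set
    \<Rightarrow> ('m \<Rightarrow> 'n) \<Rightarrow> ('n \<Rightarrow> 'k) \<Rightarrow> 'm \<Rightarrow> 'k" where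
  "dualmap sN N M f = (\<lambda>\<psi>. if \<psi> \<in> dual sN N then (\<lambda>m. if m \<in> M then \<psi> (f m) else 0) else 0)"

end

theory Submission
  imports Defs "HOL.Vector_Spaces"
begin

text \<open>The transpose \<open>f \<mapsto> f\<^sup>*\<close> is injective because the dual of a vector space separates
  points. Conversely, let \<open>F : N\<^sup>* \<rightarrow> M\<^sup>*\<close> commute with the contraactions and \<open>m \<in> M\<close>.
  The counit gives \<open>m = \<Sum>\<^sub>x e\<^sub>x \<cdot> m\<close> over finitely many objects \<open>x\<close>, and compatibility
  with the contraaction of \<open>e\<^sub>x \<otimes> \<psi>\<close> gives \<open>F \<psi> m = \<Sum>\<^sub>x F (\<psi>(e\<^sub>x \<cdot> -)) m\<close>. Since
  each \<open>e\<^sub>x \<cdot> N\<close> is finite dimensional, \<open>\<psi> \<mapsto> F \<psi> m\<close> is evaluation at a vector \<open>f m\<close>.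
  This \<open>f\<close> is linear because duals separate points, and it is a comodule map because
  equality in \<open>N \<otimes> C\<^sub>E\<close> is detected by the pure functionals \<open>\<psi> \<otimes> \<phi>\<close>, on which both
  sides pair to \<open>F \<psi> (\<phi> \<cdot> m)\<close>.\<close>

section \<open>Vector spaces carried by subsets\<close>

lemma vector_space_if_vs_axioms: "vs_axioms s \<Longrightarrow> vector_space s"
  by (simp add: vs_axioms_def vector_space_def)

lemma vs_axioms_fscale: "vs_axioms (fscale ((*) :: 'k::field \<Rightarrow> 'k \<Rightarrow> 'k) :: 'k \<Rightarrow> ('a \<Rightarrow> 'k) \<Rightarrow> _)"
  by (simp add: vs_axioms_def fscale_def algebra_simps fun_eq_iff)

lemma vector_space_fscale: "vector_space (fscale ((*) :: 'k::field \<Rightarrow> 'k \<Rightarrow> 'k) :: 'k \<Rightarrow> ('a \<Rightarrow> 'k) \<Rightarrow> _)"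
  by (rule vector_space_if_vs_axioms[OF vs_axioms_fscale])

lemma vs_axioms_cscale: "vs_axioms (cscale :: 'k::field \<Rightarrow> ('o \<Rightarrow> 'o \<Rightarrow> 'h \<Rightarrow> 'k) \<Rightarrow> _)"
  by (simp add: vs_axioms_def cscale_def algebra_simps fun_eq_iff)

lemma is_space_vector_space: "is_space s V \<Longrightarrow> vector_space s"
  by (simp add: is_space_def vector_space_if_vs_axioms)

lemma is_space_module: "is_space s V \<Longrightarrow> module s"
  by (simp add: module_iff_vector_space is_space_vector_space)

lemma is_space_subspace: "is_space s V \<Longrightarrow> module.subspace s V"
  by (metis module.subspace_def is_space_module is_space_def)

lemma is_space_zero: "is_space s V \<Longrightarrow> 0 \<in> V"
  and is_space_add: "is_space s V \<Longrightarrow> x \<in> V \<Longrightarrow> y \<in> V \<Longrightarrow> x + y \<in> V"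
  and is_space_scale: "is_space s V \<Longrightarrow> x \<in> V \<Longrightarrow> s a x \<in> V"
  by (simp_all add: is_space_def)

lemma is_space_diff: "is_space s V \<Longrightarrow> x \<in> V \<Longrightarrow> y \<in> V \<Longrightarrow> x - y \<in> V"
  using module.subspace_diff[OF is_space_module] is_space_subspace by metis

lemma is_space_sum: "is_space s V \<Longrightarrow> (\<And>i. i \<in> I \<Longrightarrow> v i \<in> V) \<Longrightarrow> (\<Sum>i\<in>I. v i) \<in> V"
  by (induct I rule: infinite_finite_induct) (auto simp: is_space_def)

lemma is_space_sum_list: "is_space s V \<Longrightarrow> set xs \<subseteq> V \<Longrightarrow> sum_list xs \<in> V"
  by (induct xs) (auto simp: is_space_def)

lemma linear_on_in: "linear_on s1 V s2 W f \<Longrightarrow> x \<in> V \<Longrightarrow> f x \<in> W"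
  and linear_on_add: "linear_on s1 V s2 W f \<Longrightarrow> x \<in> V \<Longrightarrow> y \<in> V \<Longrightarrow> f (x + y) = f x + f y"
  and linear_on_scale: "linear_on s1 V s2 W f \<Longrightarrow> x \<in> V \<Longrightarrow> f (s1 a x) = s2 a (f x)"
  by (simp_all add: linear_on_def)

lemma linear_on_zero: "linear_on s1 V s2 W f \<Longrightarrow> is_space s1 V \<Longrightarrow> f 0 = 0"
  using linear_on_add[of s1 V s2 W f 0 0] is_space_zero by fastforce

lemma linear_on_diff:
  assumes "linear_on s1 V s2 W f" "is_space s1 V" "x \<in> V" "y \<in> V"
  shows "f (x - y) = f x - f y"
  using linear_on_add[OF assms(1) is_space_diff[OF assms(2-4)] assms(4)] by (simp add: algebra_simps)

lemma linear_on_sum_scale: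
  assumes f: "linear_on s1 V s2 W f" and V: "is_space s1 V" and v: "\<And>i. i \<in> I \<Longrightarrow> v i \<in> V"
  shows "f (\<Sum>i\<in>I. s1 (a i) (v i)) = (\<Sum>i\<in>I. s2 (a i) (f (v i)))"
  using v
proof (induct I rule: infinite_finite_induct)
  case (insert i I)
  then show ?case
    using V by (simp add: linear_on_add[OF f] linear_on_scale[OF f] is_space_scale is_space_sum)
qed (use linear_on_zero[OF f V] in auto)

lemma linear_on_coact:
  assumes f: "linear_on sN N s2 W f" and N: "is_space sN N" and nu: "set (nu n) \<subseteq> N \<times> C"
  shows "f (coact sN nu \<phi> n) = sum_list (map (\<lambda>(m, c). s2 (\<phi> c) (f m)) (nu n))"
proof -
  have "f (sum_list (map (\<lambda>(m, c). sN (\<phi> c) m) xs)) = sum_list (map (\<lambda>(m, c). s2 (\<phi> c) (f m)) xs)"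
    if "set xs \<subseteq> N \<times> C" for xs
    using that
  proof (induct xs)
    case Nil
    then show ?case using linear_on_zero[OF f N] by simp
  next
    case (Cons p xs)
    obtain m c where p: "p = (m, c)" "m \<in> N" using Cons.prems by fastforce
    have "sum_list (map (\<lambda>(m, c). sN (\<phi> c) m) xs) \<in> N"
      using Cons.prems by (intro is_space_sum_list[OF N]) (auto intro: is_space_scale[OF N])
    then show ?case
      using Cons p N by (simp add: linear_on_add[OF f] linear_on_scale[OF f] is_space_scale)
  qed
  then show ?thesis using nu unfolding coact_def by blast
qed

lemma linear_on_functionalI:
  assumes V: "is_space s V" and f: "\<And>a x y. x \<in> V \<Longrightarrow> y \<in> V \<Longrightarrow> f (s a x + y) = a * f x + f y"
  shows "linear_on s V (*) UNIV f"
proof -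
  have one: "s 1 x = x" for x using V by (simp add: is_space_def vs_axioms_def)
  have "f 0 = f 0 + f 0" using f[of 0 0 1] is_space_zero[OF V] by (simp add: one)
  then have "f 0 = 0" by (metis add_cancel_right_right)
  then show ?thesis
    using f[of _ _ 1] f[of _ 0] is_space_zero[OF V] by (simp add: linear_on_def one)
qed

lemma linear_on_comp:
  "linear_on s1 U s2 V f \<Longrightarrow> linear_on s2 V s3 W g \<Longrightarrow> linear_on s1 U s3 W (g \<circ> f)"
  by (simp add: linear_on_def)

lemma sum_apply: "(\<Sum>i\<in>I. f i) x = (\<Sum>i\<in>I. f i x)"
  by (induct I rule: infinite_finite_induct) auto

section \<open>Dual spaces\<close>

lemma mem_dual_iff: "\<psi> \<in> dual s V \<longleftrightarrow> linear_on s V (*) UNIV \<psi> \<and> (\<forall>x. x \<notin> V \<longrightarrow> \<psi> x = 0)"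
  by (simp add: dual_def lin_maps_def)

lemma is_space_dual: "is_space s V \<Longrightarrow> is_space (fscale (*)) (dual s V)"
  unfolding is_space_def[of "fscale (*)"]
  by (auto simp: vs_axioms_fscale mem_dual_iff linear_on_def fscale_def is_space_def algebra_simps)

lemma dual_basis_exists:
  assumes V: "is_space s V" and B: "B \<subseteq> V" "\<not> module.dependent s B"
  shows "\<exists>\<beta>\<in>dual s V. \<forall>b'\<in>B. \<beta> b' = (if b' = b then 1 else 0)"
proof -
  interpret vector_space_pair s "(*) :: 'a \<Rightarrow> 'a \<Rightarrow> 'a"
    by (simp add: vector_space_pair_def is_space_vector_space[OF V] vector_space_if_vs_axioms
        vs_axioms_def algebra_simps)
  obtain g where g: "Vector_Spaces.linear s (*) g" "\<forall>x\<in>B. g x = (if x = b then 1 else 0)"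
    using linear_independent_extend[of B "\<lambda>x. if x = b then 1 else 0"] B(2) by blast
  interpret g: linear s "(*)" g by fact
  have "(\<lambda>v. if v \<in> V then g v else 0) \<in> dual s V"
    using V by (simp add: mem_dual_iff linear_on_def is_space_def g.add g.scale)
  then show ?thesis by (rule bexI[rotated]) (use g(2) B(1) in auto)
qed

lemma dual_eq_imp_eq:
  assumes V: "is_space s V" and "v \<in> V" "w \<in> V" and eq: "\<And>\<psi>. \<psi> \<in> dual s V \<Longrightarrow> \<psi> v = \<psi> w"
  shows "v = w"
proof (rule ccontr)
  interpret vector_space s using is_space_vector_space[OF V] .
  assume "v \<noteq> w"
  then have "\<not> dependent {v - w}" by simp
  then obtain \<beta> where \<beta>: "\<beta> \<in> dual s V" "\<beta> (v - w) = 1"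
    using dual_basis_exists[OF V, of "{v - w}" "v - w"] is_space_diff[OF V] assms(2,3) by auto
  moreover have "\<beta> (v - w) = \<beta> v - \<beta> w"
    using \<beta>(1) V assms(2,3) linear_on_diff[of s V "(*)" UNIV \<beta>] by (simp add: mem_dual_iff)
  ultimately show False using eq[OF \<beta>(1)] by simp
qed

lemma lin_span_eq_span: "vector_space s \<Longrightarrow> finite B \<Longrightarrow> lin_span s B = module.span s B"
  by (auto simp: lin_span_def module.span_finite module_iff_vector_space)

lemma dual_eq_on_lin_span:
  assumes V: "is_space s V" and B: "B \<subseteq> V" and \<psi>: "\<psi> \<in> dual s V" "\<psi>' \<in> dual s V"
    and agree: "\<And>b. b \<in> B \<Longrightarrow> \<psi> b = \<psi>' b" and v: "v \<in> lin_span s B"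
  shows "\<psi> v = \<psi>' v"
proof -
  obtain a where a: "v = (\<Sum>b\<in>B. s (a b) b)" using v unfolding lin_span_def by blast
  have "\<phi> v = (\<Sum>b\<in>B. a b * \<phi> b)" if "\<phi> \<in> dual s V" for \<phi>
    using a B linear_on_sum_scale[of s V "(*)" UNIV \<phi> B id a] V that by (auto simp: mem_dual_iff)
  then have "\<psi> v = (\<Sum>b\<in>B. a b * \<psi> b)" "\<psi>' v = (\<Sum>b\<in>B. a b * \<psi>' b)" using \<psi> by blast+
  then show ?thesis using agree by simp
qed

lemma dual_functional_is_evaluation:
  assumes V: "is_space s V" and B0: "finite B0" "B0 \<subseteq> V"
    and \<Lambda>: "linear_on (fscale (*)) (dual s V) (*) UNIV \<Lambda>"
    and local: "\<And>\<psi> \<psi>'. \<psi> \<in> dual s V \<Longrightarrow> \<psi>' \<in> dual s V \<Longrightarrow> (\<forall>b\<in>B0. \<psi> b = \<psi>' b) \<Longrightarrow> \<Lambda> \<psi> = \<Lambda> \<psi>'"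
  shows "\<exists>n\<in>V. \<forall>\<psi>\<in>dual s V. \<Lambda> \<psi> = \<psi> n"
proof -
  interpret vector_space s using is_space_vector_space[OF V] .
  obtain B where B: "B \<subseteq> B0" "\<not> dependent B" "B0 \<subseteq> span B"
    using maximal_independent_subset[of B0] by blast
  have fB: "finite B" and BV: "B \<subseteq> V" using B(1) B0 finite_subset by auto
  have basis: "\<forall>b. \<exists>\<beta>. \<beta> \<in> dual s V \<and> (\<forall>b'\<in>B. \<beta> b' = (if b' = b then 1 else 0))"
    using dual_basis_exists[OF V BV B(2)] by blast
  obtain \<beta> where "\<forall>b. \<beta> b \<in> dual s V \<and> (\<forall>b'\<in>B. \<beta> b b' = (if b' = b then 1 else 0))"
    using choice[OF basis] ..
  then have \<beta>: "\<And>b. \<beta> b \<in> dual s V" "\<And>b b'. b' \<in> B \<Longrightarrow> \<beta> b b' = (if b' = b then 1 else 0)"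
    by simp_all
  define n where "n = (\<Sum>b\<in>B. s (\<Lambda> (\<beta> b)) b)"
  have "n \<in> V" unfolding n_def using BV by (intro is_space_sum[OF V] is_space_scale[OF V]) auto
  moreover have "\<Lambda> \<psi> = \<psi> n" if \<psi>: "\<psi> \<in> dual s V" for \<psi>
  proof -
    define \<chi> where "\<chi> = (\<Sum>b\<in>B. fscale (*) (\<psi> b) (\<beta> b))"
    have \<chi>: "\<chi> \<in> dual s V"
      unfolding \<chi>_def using \<beta>(1) by (intro is_space_sum[OF is_space_dual[OF V]] is_space_scale[OF is_space_dual[OF V]])
    have "\<psi> b' = \<chi> b'" if "b' \<in> B" for b'
    proof -
      have "\<chi> b' = (\<Sum>b\<in>B. \<psi> b * (if b' = b then 1 else 0))"
        unfolding \<chi>_def fscale_def using \<beta>(2) that by (simp add: sum_apply cong: sum.cong)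
      then show ?thesis using fB that by (simp add: if_distrib sum.delta' cong: if_cong)
    qed
    then have "\<psi> b = \<chi> b" if "b \<in> B0" for b
      using dual_eq_on_lin_span[OF V BV \<psi> \<chi>] that B(3) lin_span_eq_span[OF vector_space_axioms fB]
      by blast
    then have "\<Lambda> \<psi> = \<Lambda> \<chi>" using local \<psi> \<chi> by blast
    also have "\<dots> = (\<Sum>b\<in>B. \<psi> b * \<Lambda> (\<beta> b))"
      unfolding \<chi>_def by (rule linear_on_sum_scale[OF \<Lambda> is_space_dual[OF V] \<beta>(1)])
    also have "\<dots> = \<psi> n"
      unfolding n_def using linear_on_sum_scale[of s V "(*)" UNIV \<psi> B id] \<psi> V BV
      by (simp add: mem_dual_iff mult.commute subset_eq)
    finally show ?thesis .
  qed
  ultimately show ?thesis by blast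
qed

lemma pairings_vanish_imp_zero:
  assumes V: "is_space sV V" and W: "is_space sW W"
    and B: "finite B" "B \<subseteq> W" "\<not> module.dependent sW B" and v: "\<And>b. v b \<in> V"
    and vanish: "\<And>\<psi> \<phi>. \<psi> \<in> dual sV V \<Longrightarrow> \<phi> \<in> dual sW W \<Longrightarrow> (\<Sum>b\<in>B. \<psi> (v b) * \<phi> b) = 0"
    and b: "b \<in> B"
  shows "v b = 0"
proof (rule dual_eq_imp_eq[OF V v is_space_zero[OF V]])
  fix \<psi> assume \<psi>: "\<psi> \<in> dual sV V"
  obtain \<phi> where \<phi>: "\<phi> \<in> dual sW W" "\<forall>b'\<in>B. \<phi> b' = (if b' = b then 1 else 0)"
    using dual_basis_exists[OF W B(2,3)] by blast
  have "\<psi> (v b) = (\<Sum>b'\<in>B. if b' = b then \<psi> (v b') else 0)" using B(1) b by simp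
  also have "\<dots> = (\<Sum>b'\<in>B. \<psi> (v b') * \<phi> b')" using \<phi>(2) by (intro sum.cong) auto
  also have "\<dots> = 0" by (rule vanish[OF \<psi> \<phi>(1)])
  also have "\<dots> = \<psi> 0"
    using \<psi> linear_on_zero[OF _ V, of "(*)" UNIV \<psi>] by (simp add: mem_dual_iff)
  finally show "\<psi> (v b) = \<psi> 0" .
qed

section \<open>Formal sums and tensor products\<close>

text \<open>The linear extension of \<open>\<Phi>\<close> to finitely supported formal sums; the value is junk (0)
  when the support is infinite.\<close>

definition formal_eval :: "('a \<Rightarrow> 'k::field) \<Rightarrow> ('a \<Rightarrow> 'k) \<Rightarrow> 'k" where
  "formal_eval \<Phi> d = (\<Sum>q\<in>{q. d q \<noteq> 0}. d q * \<Phi> q)"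

definition formal_kernel :: "('a \<Rightarrow> 'k::field) \<Rightarrow> ('a \<Rightarrow> 'k) set" where
  "formal_kernel \<Phi> = {d. finite {q. d q \<noteq> 0} \<and> formal_eval \<Phi> d = 0}"

lemma formal_eval_eq_sum:
  "finite T \<Longrightarrow> {q. d q \<noteq> 0} \<subseteq> T \<Longrightarrow> formal_eval \<Phi> d = (\<Sum>q\<in>T. d q * \<Phi> q)"
  unfolding formal_eval_def by (rule sum.mono_neutral_left) auto

lemma formal_eval_add_diff:
  assumes "finite {q. d q \<noteq> 0}" "finite {q. e q \<noteq> 0}"
  shows formal_eval_add: "formal_eval \<Phi> (d + e) = formal_eval \<Phi> d + formal_eval \<Phi> e"
    and formal_eval_diff: "formal_eval \<Phi> (d - e) = formal_eval \<Phi> d - formal_eval \<Phi> e"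
proof -
  let ?T = "{q. d q \<noteq> 0} \<union> {q. e q \<noteq> 0}"
  have eval: "formal_eval \<Phi> f = (\<Sum>q\<in>?T. f q * \<Phi> q)" if "{q. f q \<noteq> 0} \<subseteq> ?T" for f
    using formal_eval_eq_sum assms that by blast
  have "{q. (d + e) q \<noteq> 0} \<subseteq> ?T" "{q. (d - e) q \<noteq> 0} \<subseteq> ?T" by auto
  then show "formal_eval \<Phi> (d + e) = formal_eval \<Phi> d + formal_eval \<Phi> e"
    "formal_eval \<Phi> (d - e) = formal_eval \<Phi> d - formal_eval \<Phi> e"
    by (simp_all add: eval distrib_right left_diff_distrib sum.distrib sum_subtractf)
qed

lemma formal_eval_scale:
  "finite {q. d q \<noteq> 0} \<Longrightarrow> formal_eval \<Phi> (fscale (*) a d) = a * formal_eval \<Phi> d"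
  by (subst (1 2) formal_eval_eq_sum[of "{q. d q \<noteq> 0}"])
    (auto simp: fscale_def sum_distrib_left mult.assoc)

lemma formal_eval_delta: "formal_eval \<Phi> (delta p) = \<Phi> p"
  by (subst formal_eval_eq_sum[of "{p}"]) (auto simp: delta_def)

lemma finite_support_delta: "finite {q. (delta p :: _ \<Rightarrow> 'k::field) q \<noteq> 0}"
  by (simp add: delta_def)

lemma finite_support_free: "finite {q. (free xs :: _ \<Rightarrow> 'k::field) q \<noteq> 0}"
proof (rule finite_subset[of _ "set xs"])
  show "{q. (free xs :: _ \<Rightarrow> 'k) q \<noteq> 0} \<subseteq> set xs"
    using count_notin[of _ xs] by (fastforce simp: free_def)
qed simp

lemma finite_support_diff:
  fixes d e :: "'a \<Rightarrow> 'k::field"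
  shows "finite {q. d q \<noteq> 0} \<Longrightarrow> finite {q. e q \<noteq> 0} \<Longrightarrow> finite {q. (d - e) q \<noteq> 0}"
  by (rule finite_subset[of _ "{q. d q \<noteq> 0} \<union> {q. e q \<noteq> 0}"]) auto

lemma finite_support_fscale:
  fixes d :: "'a \<Rightarrow> 'k::field"
  shows "finite {q. d q \<noteq> 0} \<Longrightarrow> finite {q. fscale (*) a d q \<noteq> 0}"
  by (rule finite_subset[of _ "{q. d q \<noteq> 0}"]) (auto simp: fscale_def)

lemma formal_eval_free:
  fixes \<Phi> :: "'a \<Rightarrow> 'k::field"
  shows "formal_eval \<Phi> (free xs) = sum_list (map \<Phi> xs)"
proof (induct xs)
  case Nil
  then show ?case by (simp add: formal_eval_def free_def)
next
  case (Cons x xs)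
  have "(free (x # xs) :: 'a \<Rightarrow> 'k) = delta x + free xs"
    by (simp add: fun_eq_iff free_def delta_def)
  then have "formal_eval \<Phi> (free (x # xs)) = formal_eval \<Phi> (delta x) + formal_eval \<Phi> (free xs)"
    by (simp add: formal_eval_add finite_support_delta finite_support_free)
  then show ?case by (simp add: formal_eval_delta Cons)
qed

lemma formal_kernel_subspace:
  fixes \<Phi> :: "'a \<Rightarrow> 'k::field"
  shows "module.subspace (fscale (*)) (formal_kernel \<Phi>)"
proof -
  interpret vector_space "fscale (*) :: 'k \<Rightarrow> ('a \<Rightarrow> 'k) \<Rightarrow> _"
    by (rule vector_space_fscale)
  show ?thesis
  proof (rule subspaceI)
    show "0 \<in> formal_kernel \<Phi>" by (simp add: formal_kernel_def formal_eval_def)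
  next
    fix d e assume "d \<in> formal_kernel \<Phi>" "e \<in> formal_kernel \<Phi>"
    moreover have "{q. (d + e) q \<noteq> 0} \<subseteq> {q. d q \<noteq> 0} \<union> {q. e q \<noteq> 0}" by auto
    ultimately show "d + e \<in> formal_kernel \<Phi>"
      by (auto simp: formal_kernel_def formal_eval_add intro: finite_subset)
  next
    fix a d assume "d \<in> formal_kernel \<Phi>"
    moreover have "{q. fscale (*) a d q \<noteq> 0} \<subseteq> {q. d q \<noteq> 0}" by (auto simp: fscale_def)
    ultimately show "fscale (*) a d \<in> formal_kernel \<Phi>"
      by (auto simp: formal_kernel_def formal_eval_scale intro: finite_subset)
  qed
qed

lemma finite_support_sum:
  "(\<And>i. i \<in> I \<Longrightarrow> finite {q. f i q \<noteq> 0}) \<Longrightarrow> finite {q. (\<Sum>i\<in>I. f i) q \<noteq> 0}"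
proof (induct I rule: infinite_finite_induct)
  case (insert i I)
  have "{q. (\<Sum>i\<in>insert i I. f i) q \<noteq> 0} \<subseteq> {q. f i q \<noteq> 0} \<union> {q. (\<Sum>i\<in>I. f i) q \<noteq> 0}"
    using insert(1,2) by auto
  then show ?case using insert by (auto intro: finite_subset)
qed simp_all

lemma formal_eval_sum:
  "(\<And>i. i \<in> I \<Longrightarrow> finite {q. f i q \<noteq> 0}) \<Longrightarrow>
    formal_eval \<Phi> (\<Sum>i\<in>I. f i) = (\<Sum>i\<in>I. formal_eval \<Phi> (f i))"
proof (induct I rule: infinite_finite_induct)
  case (insert i I)
  then have "formal_eval \<Phi> (f i + (\<Sum>i\<in>I. f i)) = formal_eval \<Phi> (f i) + formal_eval \<Phi> (\<Sum>i\<in>I. f i)"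
    by (intro formal_eval_add finite_support_sum) auto
  then show ?case using insert by (simp only: sum.insert[OF insert(1,2)]) simp
qed (simp_all add: formal_eval_def)

lemma formal_sum_expansion:
  assumes "finite S" "\<And>q. q \<notin> S \<Longrightarrow> d q = 0"
  shows "d = (\<Sum>p\<in>S. fscale (*) (d p) (delta p))"
proof
  fix q
  have "(\<Sum>p\<in>S. fscale (*) (d p) (delta p)) q = (\<Sum>p\<in>S. if q = p then d p else 0)"
    by (simp add: sum_apply fscale_def delta_def if_distrib cong: if_cong)
  then show "d q = (\<Sum>p\<in>S. fscale (*) (d p) (delta p)) q" using assms by auto
qed

definition bilin_on :: "('k::field \<Rightarrow> 'v::ab_group_add \<Rightarrow> 'v) \<Rightarrow> 'v set
    \<Rightarrow> ('k \<Rightarrow> 'w::ab_group_add \<Rightarrow> 'w) \<Rightarrow> 'w set \<Rightarrow> ('v \<times> 'w \<Rightarrow> 'k) \<Rightarrow> bool" where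
  "bilin_on sV V sW W \<Phi> \<longleftrightarrow>
     (\<forall>x\<in>V. \<forall>x'\<in>V. \<forall>y\<in>W. \<Phi> (x + x', y) = \<Phi> (x, y) + \<Phi> (x', y)) \<and>
     (\<forall>x\<in>V. \<forall>y\<in>W. \<forall>y'\<in>W. \<Phi> (x, y + y') = \<Phi> (x, y) + \<Phi> (x, y')) \<and>
     (\<forall>a. \<forall>x\<in>V. \<forall>y\<in>W. \<Phi> (sV a x, y) = a * \<Phi> (x, y)) \<and>
     (\<forall>a. \<forall>x\<in>V. \<forall>y\<in>W. \<Phi> (x, sW a y) = a * \<Phi> (x, y))"

lemma bilin_on_tensor:
  "\<psi> \<in> dual sV V \<Longrightarrow> \<phi> \<in> dual sW W \<Longrightarrow> bilin_on sV V sW W (\<lambda>(x, y). \<psi> x * \<phi> y)"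
  by (simp add: bilin_on_def mem_dual_iff linear_on_def algebra_simps)

lemma rel2_subset_formal_kernel:
  assumes "bilin_on sV V sW W \<Phi>"
  shows "rel2 sV V sW W \<subseteq> formal_kernel \<Phi>"
proof -
  have additive: "delta p - delta p' - delta p'' \<in> formal_kernel \<Phi>" if "\<Phi> p = \<Phi> p' + \<Phi> p''" for p p' p''
  proof -
    have fin: "finite {q. (delta p - delta p') q \<noteq> 0}"
      by (rule finite_support_diff[OF finite_support_delta finite_support_delta])
    have "formal_eval \<Phi> (delta p - delta p' - delta p'') = \<Phi> p - \<Phi> p' - \<Phi> p''"
      by (simp only: formal_eval_diff[OF fin finite_support_delta] formal_eval_delta
          formal_eval_diff[OF finite_support_delta finite_support_delta])
    then show ?thesis
      unfolding formal_kernel_def using that finite_support_diff[OF fin finite_support_delta] by simp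
  qed
  have homogeneous: "delta p - (\<lambda>q. a * delta p' q) \<in> formal_kernel \<Phi>" if "\<Phi> p = a * \<Phi> p'" for a p p'
  proof -
    have scaled: "(\<lambda>q. a * delta p' q) = fscale (*) a (delta p')" by (simp add: fscale_def)
    have fin: "finite {q. fscale (*) a (delta p') q \<noteq> 0}"
      by (rule finite_support_fscale[OF finite_support_delta])
    have "formal_eval \<Phi> (delta p - fscale (*) a (delta p')) = \<Phi> p - a * \<Phi> p'"
      by (simp only: formal_eval_diff[OF finite_support_delta fin] formal_eval_delta
          formal_eval_scale[OF finite_support_delta])
    then show ?thesis
      unfolding formal_kernel_def scaled using that finite_support_diff[OF finite_support_delta fin] by simp
  qed
  show ?thesis
    using assms unfolding rel2_def bilin_on_def by (auto intro!: additive homogeneous)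
qed

lemma fspan_eq_span: "fspan G = module.span (fscale (*)) (G :: ('a \<Rightarrow> 'k::field) set)"
proof -
  interpret vector_space "fscale (*) :: 'k \<Rightarrow> ('a \<Rightarrow> 'k) \<Rightarrow> _"
    by (rule vector_space_fscale)
  have eq: "(\<Sum>g\<in>F. fscale (*) (a g) g) = (\<lambda>q. \<Sum>g\<in>F. a g * g q)" for F a
    by (simp add: fun_eq_iff sum_apply fscale_def)
  show ?thesis unfolding fspan_def span_explicit eq by blast
qed

lemma span_rel2_subset_formal_kernel:
  "bilin_on sV V sW W \<Phi> \<Longrightarrow> module.span (fscale (*)) (rel2 sV V sW W) \<subseteq> formal_kernel \<Phi>"
  by (rule module.span_minimal[OF _ rel2_subset_formal_kernel formal_kernel_subspace])
    (simp add: module_iff_vector_space vector_space_fscale)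

lemma teq2_imp_sum_list_eq:
  assumes "teq2 sV V sW W xs ys" "bilin_on sV V sW W \<Phi>"
  shows "sum_list (map \<Phi> xs) = sum_list (map \<Phi> ys)"
proof -
  have "free xs - free ys \<in> formal_kernel \<Phi>"
    using assms span_rel2_subset_formal_kernel unfolding teq2_def fspan_eq_span by blast
  then show ?thesis
    by (simp add: formal_kernel_def formal_eval_diff finite_support_free formal_eval_free)
qed

lemma sum_scale_mod_subspace:
  assumes F: "vector_space sF" and R: "module.subspace sF R" and V: "is_space sV V"
    and add: "\<And>x x'. x \<in> V \<Longrightarrow> x' \<in> V \<Longrightarrow> h (x + x') - h x - h x' \<in> R"
    and scale: "\<And>a x. x \<in> V \<Longrightarrow> h (sV a x) - sF a (h x) \<in> R"
    and I: "finite I" "\<And>i. i \<in> I \<Longrightarrow> v i \<in> V"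
  shows "h (\<Sum>i\<in>I. sV (a i) (v i)) - (\<Sum>i\<in>I. sF (a i) (h (v i))) \<in> R"
  using I
proof (induct I rule: finite_induct)
  case empty
  interpret vector_space sF by fact
  have "- (h (0 + 0) - h 0 - h 0) \<in> R"
    using subspace_neg[OF R] add is_space_zero[OF V] by blast
  then show ?case by simp
next
  case (insert i I)
  interpret vector_space sF by fact
  let ?S = "\<Sum>i\<in>I. sV (a i) (v i)" and ?c = "sV (a i) (v i)"
  have "?S \<in> V" "?c \<in> V"
    using insert by (auto intro: is_space_sum[OF V] is_space_scale[OF V])
  then have "(h (?c + ?S) - h ?c - h ?S) + (h ?c - sF (a i) (h (v i)))
      + (h ?S - (\<Sum>i\<in>I. sF (a i) (h (v i)))) \<in> R"
    using add scale insert by (intro subspace_add[OF R]) auto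
  then show ?case using insert(1,2) by (simp add: algebra_simps)
qed

lemma delta_sum_left_mod_rel2:
  fixes sV :: "'k::field \<Rightarrow> 'v::ab_group_add \<Rightarrow> 'v" and sW :: "'k \<Rightarrow> 'w::ab_group_add \<Rightarrow> 'w"
  assumes V: "is_space sV V" and W: "is_space sW W" and y: "y \<in> W"
    and I: "finite I" "\<And>i. i \<in> I \<Longrightarrow> v i \<in> V"
  shows "delta (\<Sum>i\<in>I. sV (a i) (v i), y) - (\<Sum>i\<in>I. fscale (*) (a i) (delta (v i, y)))
    \<in> module.span (fscale (*)) (rel2 sV V sW W)"
proof (rule sum_scale_mod_subspace[OF vector_space_fscale _ V _ _ I])
  interpret vector_space "fscale (*) :: 'k \<Rightarrow> ('v \<times> 'w \<Rightarrow> 'k) \<Rightarrow> _" by (rule vector_space_fscale)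
  show "subspace (span (rel2 sV V sW W))" by simp
  show "delta (x + x', y) - delta (x, y) - delta (x', y) \<in> span (rel2 sV V sW W)"
    if "x \<in> V" "x' \<in> V" for x x'
    using that y by (intro span_base) (auto simp: rel2_def)
  show "delta (sV c x, y) - fscale (*) c (delta (x, y)) \<in> span (rel2 sV V sW W)"
    if "x \<in> V" for c x
    using that y by (intro span_base) (auto simp: rel2_def fscale_def)
qed

lemma delta_sum_right_mod_rel2:
  fixes sV :: "'k::field \<Rightarrow> 'v::ab_group_add \<Rightarrow> 'v" and sW :: "'k \<Rightarrow> 'w::ab_group_add \<Rightarrow> 'w"
  assumes V: "is_space sV V" and W: "is_space sW W" and x: "x \<in> V"
    and I: "finite I" "\<And>i. i \<in> I \<Longrightarrow> w i \<in> W"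
  shows "delta (x, \<Sum>i\<in>I. sW (a i) (w i)) - (\<Sum>i\<in>I. fscale (*) (a i) (delta (x, w i)))
    \<in> module.span (fscale (*)) (rel2 sV V sW W)"
proof (rule sum_scale_mod_subspace[OF vector_space_fscale _ W _ _ I])
  interpret vector_space "fscale (*) :: 'k \<Rightarrow> ('v \<times> 'w \<Rightarrow> 'k) \<Rightarrow> _" by (rule vector_space_fscale)
  show "subspace (span (rel2 sV V sW W))" by simp
  show "delta (x, y + y') - delta (x, y) - delta (x, y') \<in> span (rel2 sV V sW W)"
    if "y \<in> W" "y' \<in> W" for y y'
    using that x by (intro span_base) (auto simp: rel2_def)
  show "delta (x, sW c y) - fscale (*) c (delta (x, y)) \<in> span (rel2 sV V sW W)"
    if "y \<in> W" for c y
    using that x by (intro span_base) (auto simp: rel2_def fscale_def)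
qed

lemma rel2_reduce_right_factors:
  fixes sV :: "'k::field \<Rightarrow> 'v::ab_group_add \<Rightarrow> 'v" and sW :: "'k \<Rightarrow> 'w::ab_group_add \<Rightarrow> 'w"
  assumes V: "is_space sV V" and W: "is_space sW W" and S: "finite S" "S \<subseteq> V \<times> W"
    and d: "\<And>q. q \<notin> S \<Longrightarrow> d q = 0" and B: "finite B" "B \<subseteq> W"
    and \<alpha>: "\<And>p. p \<in> S \<Longrightarrow> snd p = (\<Sum>b\<in>B. sW (\<alpha> p b) b)"
  shows "d - (\<Sum>b\<in>B. delta (\<Sum>p\<in>S. sV (d p * \<alpha> p b) (fst p), b))
    \<in> module.span (fscale (*)) (rel2 sV V sW W)"
proof -
  interpret F: vector_space "fscale (*) :: 'k \<Rightarrow> ('v \<times> 'w \<Rightarrow> 'k) \<Rightarrow> _" by (rule vector_space_fscale)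
  let ?R = "F.span (rel2 sV V sW W)"
  define v where "v b = (\<Sum>p\<in>S. sV (d p * \<alpha> p b) (fst p))" for b
  define X where "X p b = fscale (*) (d p * \<alpha> p b) (delta (fst p, b))" for p b
  have right: "delta p - (\<Sum>b\<in>B. fscale (*) (\<alpha> p b) (delta (fst p, b))) \<in> ?R" if "p \<in> S" for p
  proof -
    have p: "delta p = delta (fst p, \<Sum>b\<in>B. sW (\<alpha> p b) b)"
      using \<alpha>[OF that] by (metis prod.collapse)
    have "fst p \<in> V" using that S(2) mem_Times_iff by blast
    then show ?thesis
      unfolding p using delta_sum_right_mod_rel2[OF V W _ B(1), of "fst p" id "\<alpha> p"] B(2) by auto
  qed
  have left: "delta (v b, b) - (\<Sum>p\<in>S. X p b) \<in> ?R" if "b \<in> B" for b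
    unfolding v_def X_def using that S(2) B(2)
    by (intro delta_sum_left_mod_rel2[OF V W _ S(1)]) (auto simp: mult.commute)
  have "(\<Sum>p\<in>S. fscale (*) (d p) (delta p - (\<Sum>b\<in>B. fscale (*) (\<alpha> p b) (delta (fst p, b)))))
        - (\<Sum>b\<in>B. delta (v b, b) - (\<Sum>p\<in>S. X p b))
      = (\<Sum>p\<in>S. fscale (*) (d p) (delta p)) - (\<Sum>p\<in>S. \<Sum>b\<in>B. X p b)
        - ((\<Sum>b\<in>B. delta (v b, b)) - (\<Sum>b\<in>B. \<Sum>p\<in>S. X p b))"
    by (simp only: X_def F.scale_right_diff_distrib F.scale_sum_right F.scale_scale sum_subtractf)
  also have "\<dots> = d - (\<Sum>b\<in>B. delta (v b, b))"
    using formal_sum_expansion[OF S(1) d] sum.swap[of X B S] by simp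
  finally have "d - (\<Sum>b\<in>B. delta (v b, b))
      = (\<Sum>p\<in>S. fscale (*) (d p) (delta p - (\<Sum>b\<in>B. fscale (*) (\<alpha> p b) (delta (fst p, b)))))
        - (\<Sum>b\<in>B. delta (v b, b) - (\<Sum>p\<in>S. X p b))" ..
  also have "\<dots> \<in> ?R"
  proof (rule F.span_diff)
    show "(\<Sum>p\<in>S. fscale (*) (d p) (delta p - (\<Sum>b\<in>B. fscale (*) (\<alpha> p b) (delta (fst p, b))))) \<in> ?R"
      using right by (intro F.span_sum F.span_scale)
    show "(\<Sum>b\<in>B. delta (v b, b) - (\<Sum>p\<in>S. X p b)) \<in> ?R"
      using left by (intro F.span_sum)
  qed
  finally show ?thesis unfolding v_def .
qed

lemma rel2_normal_form:
  fixes sV :: "'k::field \<Rightarrow> 'v::ab_group_add \<Rightarrow> 'v" and sW :: "'k \<Rightarrow> 'w::ab_group_add \<Rightarrow> 'w"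
  assumes V: "is_space sV V" and W: "is_space sW W" and S: "finite S" "S \<subseteq> V \<times> W"
    and d: "\<And>q. q \<notin> S \<Longrightarrow> d q = 0"
  obtains B v where "finite B" "B \<subseteq> W" "\<not> module.dependent sW B" "\<And>b. v b \<in> V"
    "d - (\<Sum>b\<in>B. delta (v b, b)) \<in> module.span (fscale (*)) (rel2 sV V sW W)"
proof -
  interpret W: vector_space sW by (rule is_space_vector_space[OF W])
  obtain B where B: "B \<subseteq> snd ` S" "\<not> W.dependent B" "snd ` S \<subseteq> W.span B"
    using W.maximal_independent_subset by blast
  have fB: "finite B" using B(1) S(1) finite_subset by blast
  have BW: "B \<subseteq> W" using B(1) S(2) by force
  have "\<forall>p\<in>S. \<exists>u. snd p = (\<Sum>b\<in>B. sW (u b) b)"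
    using B(3) W.span_finite[OF fB] by auto
  then obtain \<alpha> where \<alpha>: "\<forall>p\<in>S. snd p = (\<Sum>b\<in>B. sW (\<alpha> p b) b)"
    by (rule bchoice[THEN exE])
  have "d - (\<Sum>b\<in>B. delta (\<Sum>p\<in>S. sV (d p * \<alpha> p b) (fst p), b))
      \<in> module.span (fscale (*)) (rel2 sV V sW W)"
  proof (rule rel2_reduce_right_factors[OF V W S _ fB BW])
    show "\<And>q. q \<notin> S \<Longrightarrow> d q = 0" by (rule d)
    show "\<And>p. p \<in> S \<Longrightarrow> snd p = (\<Sum>b\<in>B. sW (\<alpha> p b) b)" by (rule \<alpha>[rule_format])
  qed
  moreover have "(\<Sum>p\<in>S. sV (d p * \<alpha> p b) (fst p)) \<in> V" for b
    using S(2) by (intro is_space_sum[OF V] is_space_scale[OF V]) auto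
  ultimately show ?thesis by (rule that[OF fB BW B(2), rotated])
qed

lemma teq2_if_pairings_eq:
  fixes sV :: "'k::field \<Rightarrow> 'v::ab_group_add \<Rightarrow> 'v" and sW :: "'k \<Rightarrow> 'w::ab_group_add \<Rightarrow> 'w"
  assumes V: "is_space sV V" and W: "is_space sW W"
    and xs: "set xs \<subseteq> V \<times> W" and ys: "set ys \<subseteq> V \<times> W"
    and pairings: "\<And>\<psi> \<phi>. \<psi> \<in> dual sV V \<Longrightarrow> \<phi> \<in> dual sW W \<Longrightarrow>
       sum_list (map (\<lambda>(x, y). \<psi> x * \<phi> y) xs) = sum_list (map (\<lambda>(x, y). \<psi> x * \<phi> y) ys)"
  shows "teq2 sV V sW W xs ys"
proof -
  interpret F: vector_space "fscale (*) :: 'k \<Rightarrow> ('v \<times> 'w \<Rightarrow> 'k) \<Rightarrow> _" by (rule vector_space_fscale)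
  let ?R = "F.span (rel2 sV V sW W)"
  define d :: "'v \<times> 'w \<Rightarrow> 'k" where "d = free xs - free ys"
  have d0: "d q = 0" if "q \<notin> set xs \<union> set ys" for q
    using that count_notin[of q] by (simp add: d_def free_def)
  have S: "finite (set xs \<union> set ys)" "set xs \<union> set ys \<subseteq> V \<times> W" using xs ys by auto
  obtain B v where B: "finite B" "B \<subseteq> W" "\<not> module.dependent sW B" and v: "\<And>b. v b \<in> V"
    and dR: "d - (\<Sum>b\<in>B. delta (v b, b)) \<in> ?R"
    using rel2_normal_form[of sV V sW W _ d, OF V W S d0] by blast
  have "(\<Sum>b\<in>B. \<psi> (v b) * \<phi> b) = 0" if \<psi>: "\<psi> \<in> dual sV V" and \<phi>: "\<phi> \<in> dual sW W" for \<psi> \<phi>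
  proof -
    define \<Phi> where "\<Phi> = (\<lambda>(x, y). \<psi> x * \<phi> y)"
    have "d - (\<Sum>b\<in>B. delta (v b, b)) \<in> formal_kernel \<Phi>"
      using dR span_rel2_subset_formal_kernel[OF bilin_on_tensor[OF \<psi> \<phi>]] unfolding \<Phi>_def by blast
    moreover have "finite {q. d q \<noteq> 0}"
      unfolding d_def by (rule finite_support_diff[OF finite_support_free finite_support_free])
    then have "formal_eval \<Phi> (d - (\<Sum>b\<in>B. delta (v b, b)))
        = formal_eval \<Phi> d - formal_eval \<Phi> (\<Sum>b\<in>B. delta (v b, b))"
      by (rule formal_eval_diff[OF _ finite_support_sum[OF finite_support_delta]])
    ultimately have "formal_eval \<Phi> (\<Sum>b\<in>B. delta (v b, b)) = formal_eval \<Phi> d"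
      by (simp add: formal_kernel_def)
    also have "\<dots> = 0"
      using pairings[OF \<psi> \<phi>] by (simp add: d_def \<Phi>_def formal_eval_diff finite_support_free formal_eval_free)
    finally show ?thesis
      by (simp add: formal_eval_sum finite_support_delta formal_eval_delta \<Phi>_def)
  qed
  then have "v b = 0" if "b \<in> B" for b
    using pairings_vanish_imp_zero[where v = v, OF V W B v] that by blast
  moreover have "delta (0, b) \<in> ?R" if "b \<in> B" for b
    using delta_sum_left_mod_rel2[OF V W, of b "{}"] that B(2) by auto
  ultimately have "(\<Sum>b\<in>B. delta (v b, b)) \<in> ?R"
    by (intro F.span_sum) simp
  from F.span_add[OF dR this] have "d \<in> ?R" by simp
  then show ?thesis unfolding teq2_def fspan_eq_span d_def using xs ys by blast
qed

section \<open>Comodules and their dual contramodules\<close>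

lemma is_space_CE:
  assumes "\<And>x y. is_space s (Hom x y)"
  shows "is_space cscale (CE s Hom)"
  unfolding is_space_def[of cscale]
proof (intro conjI allI ballI)
  note D = is_space_dual[OF assms]
  show "vs_axioms cscale" by (rule vs_axioms_cscale)
  show "0 \<in> CE s Hom" using is_space_zero[OF D] by (simp add: CE_def)
next
  fix c c' assume c: "c \<in> CE s Hom" "c' \<in> CE s Hom"
  have "finite {(x, y). (c + c') x y \<noteq> 0}"
    by (rule finite_subset[of _ "{(x, y). c x y \<noteq> 0} \<union> {(x, y). c' x y \<noteq> 0}"])
      (use c in \<open>auto simp: CE_def\<close>)
  then show "c + c' \<in> CE s Hom"
    using c is_space_add[OF is_space_dual[OF assms]] by (simp add: CE_def)
next
  fix a c assume c: "c \<in> CE s Hom"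
  have "cscale a c x y = fscale (*) a (c x y)" for x y by (simp add: cscale_def fscale_def fun_eq_iff)
  moreover have "finite {(x, y). cscale a c x y \<noteq> 0}"
    by (rule finite_subset[of _ "{(x, y). c x y \<noteq> 0}"]) (use c in \<open>auto simp: CE_def cscale_def\<close>)
  ultimately show "cscale a c \<in> CE s Hom"
    using c is_space_scale[OF is_space_dual[OF assms]] by (simp add: CE_def)
qed

lemma
  assumes "rcomod s Hom cmp idm sN N nu"
  shows rcomod_space: "is_space sN N"
    and rcomod_coaction: "n \<in> N \<Longrightarrow> set (nu n) \<subseteq> N \<times> CE s Hom"
    and rcomod_coaction_linear: "n \<in> N \<Longrightarrow> n' \<in> N \<Longrightarrow>
      teq2 sN N cscale (CE s Hom) (nu (sN a n + n')) (map (\<lambda>(m, c). (sN a m, c)) (nu n) @ nu n')"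
    and rcomod_counit: "n \<in> N \<Longrightarrow> coact sN nu (counit idm) n = n"
  using assms by (simp_all add: rcomod_def)

lemma rcomod_coact_mem: "rcomod s Hom cmp idm sN N nu \<Longrightarrow> n \<in> N \<Longrightarrow> coact sN nu \<phi> n \<in> N"
  unfolding coact_def using rcomod_coaction[of s Hom cmp idm sN N nu n]
  by (intro is_space_sum_list[OF rcomod_space]) (auto intro: is_space_scale[OF rcomod_space])

lemma bilin_on_lin_maps_dual:
  "g \<in> lin_maps sC C (fscale (*)) (dual sN N) \<Longrightarrow> bilin_on sN N sC C (\<lambda>(m, c). g c m)"
  by (auto simp: bilin_on_def lin_maps_def linear_on_def mem_dual_iff fscale_def)

lemma dual_pi_mem_dual:
  assumes R: "rcomod s Hom cmp idm sN N nu"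
    and g: "g \<in> lin_maps cscale (CE s Hom) (fscale (*)) (dual sN N)"
  shows "dual_pi N nu g \<in> dual sN N"
proof -
  note N = rcomod_space[OF R]
  define \<Phi> where "\<Phi> = (\<lambda>(m, c). g c m)"
  have bil: "bilin_on sN N cscale (CE s Hom) \<Phi>"
    unfolding \<Phi>_def by (rule bilin_on_lin_maps_dual[OF g])
  have "sum_list (map \<Phi> (nu (sN a n + n'))) = a * sum_list (map \<Phi> (nu n)) + sum_list (map \<Phi> (nu n'))"
    if "n \<in> N" "n' \<in> N" for a n n'
  proof -
    have "sum_list (map \<Phi> (map (\<lambda>(m, c). (sN a m, c)) (nu n))) = sum_list (map (\<lambda>p. a * \<Phi> p) (nu n))"
      using rcomod_coaction[OF R that(1)] bil
      by (intro arg_cong[where f = sum_list]) (auto simp: bilin_on_def)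
    then show ?thesis
      using teq2_imp_sum_list_eq[OF rcomod_coaction_linear[OF R that] bil]
      by (simp add: sum_list_const_mult)
  qed
  then have "linear_on sN N (*) UNIV (\<lambda>n. sum_list (map \<Phi> (nu n)))"
    by (intro linear_on_functionalI[OF N])
  then show ?thesis
    by (simp add: mem_dual_iff linear_on_def dual_pi_def \<Phi>_def split_beta' is_space_add[OF N]
        is_space_scale[OF N])
qed

lemma dualmap_apply: "\<psi> \<in> dual sN N \<Longrightarrow> m \<in> M \<Longrightarrow> dualmap sN N M f \<psi> m = \<psi> (f m)"
  by (simp add: dualmap_def)

lemma dualmap_lin_maps:
  assumes M: "is_space sM M" and N: "is_space sN N" and f: "linear_on sM M sN N f"
  shows "dualmap sN N M f \<in> lin_maps (fscale (*)) (dual sN N) (fscale (*)) (dual sM M)"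
proof -
  have "dualmap sN N M f \<psi> \<in> dual sM M" if "\<psi> \<in> dual sN N" for \<psi>
    using that M f
    by (simp add: dualmap_def mem_dual_iff linear_on_def is_space_add[OF M] is_space_scale[OF M])
  moreover have "dualmap sN N M f (\<psi> + \<psi>') = dualmap sN N M f \<psi> + dualmap sN N M f \<psi>'"
    "dualmap sN N M f (fscale (*) a \<psi>) = fscale (*) a (dualmap sN N M f \<psi>)"
    if "\<psi> \<in> dual sN N" "\<psi>' \<in> dual sN N" for a \<psi> \<psi>'
    using that is_space_add[OF is_space_dual[OF N]] is_space_scale[OF is_space_dual[OF N]]
    by (auto simp: dualmap_def fscale_def fun_eq_iff)
  ultimately show ?thesis by (simp add: lin_maps_def linear_on_def dualmap_def)
qed

lemma dualmap_inj_on: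
  assumes N: "is_space sN N"
  shows "inj_on (dualmap sN N M) (lin_maps sM M sN N)"
proof (rule inj_onI, rule ext)
  fix f f' m
  assume f: "f \<in> lin_maps sM M sN N" and f': "f' \<in> lin_maps sM M sN N"
    and eq: "dualmap sN N M f = dualmap sN N M f'"
  show "f m = f' m"
  proof (cases "m \<in> M")
    case True
    then have "f m \<in> N" "f' m \<in> N"
      using f f' by (simp_all add: lin_maps_def linear_on_def)
    then show ?thesis
      by (rule dual_eq_imp_eq[OF N]) (metis eq True dualmap_apply)
  next
    case False
    then show ?thesis using f f' by (simp add: lin_maps_def)
  qed
qed

lemma dualmap_mem_contra_hom:
  assumes RM: "rcomod s Hom cmp idm sM M nuM" and RN: "rcomod s Hom cmp idm sN N nuN"
    and f: "f \<in> comod_hom s Hom sM M nuM sN N nuN"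
  shows "dualmap sN N M f \<in> contra_hom s Hom (fscale (*)) (dual sN N) (dual_pi N nuN)
                             (fscale (*)) (dual sM M) (dual_pi M nuM)"
proof -
  have fl: "linear_on sM M sN N f"
    and fT: "\<And>m. m \<in> M \<Longrightarrow> teq2 sN N cscale (CE s Hom) (nuN (f m)) (map (\<lambda>(m', c). (f m', c)) (nuM m))"
    using f by (auto simp: comod_hom_def lin_maps_def)
  have "dualmap sN N M f (dual_pi N nuN g) m = dual_pi M nuM (dualmap sN N M f \<circ> g) m"
    if g: "g \<in> lin_maps cscale (CE s Hom) (fscale (*)) (dual sN N)" for g m
  proof (cases "m \<in> M")
    case True
    have gD: "g c \<in> dual sN N" if "c \<in> CE s Hom" for c
      using g that by (simp add: lin_maps_def linear_on_def)
    have "dualmap sN N M f (dual_pi N nuN g) m = dual_pi N nuN g (f m)"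
      by (rule dualmap_apply[OF dual_pi_mem_dual[OF RN g] True])
    also have "\<dots> = sum_list (map (\<lambda>(n, c). g c n) (nuN (f m)))"
      using linear_on_in[OF fl True] by (simp add: dual_pi_def)
    also have "\<dots> = sum_list (map ((\<lambda>(n, c). g c n) \<circ> (\<lambda>(m', c). (f m', c))) (nuM m))"
      using teq2_imp_sum_list_eq[OF fT[OF True] bilin_on_lin_maps_dual[OF g]] by simp
    also have "\<dots> = dual_pi M nuM (dualmap sN N M f \<circ> g) m"
    proof -
      have "dualmap sN N M f (g c) m' = g c (f m')" if "(m', c) \<in> set (nuM m)" for m' c
        using that rcomod_coaction[OF RM True] gD by (intro dualmap_apply) auto
      then show ?thesis using True by (auto simp: dual_pi_def intro!: arg_cong[where f = sum_list])
    qed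
    finally show ?thesis .
  next
    case False
    then show ?thesis by (simp add: dualmap_def dual_pi_def)
  qed
  then show ?thesis
    using dualmap_lin_maps[OF rcomod_space[OF RM] rcomod_space[OF RN] fl]
    by (auto simp: contra_hom_def)
qed

lemma ev_id_linear_on: "linear_on cscale (CE s Hom) (*) UNIV (ev_id idm x)"
  by (simp add: linear_on_def ev_id_def cscale_def)

definition dual_coact :: "('k::field \<Rightarrow> 'n::ab_group_add \<Rightarrow> 'n) \<Rightarrow> 'n set \<Rightarrow> ('n \<Rightarrow> ('n \<times> 'c) list)
    \<Rightarrow> ('c \<Rightarrow> 'k) \<Rightarrow> ('n \<Rightarrow> 'k) \<Rightarrow> 'n \<Rightarrow> 'k" where
  "dual_coact sN N nu \<phi> \<psi> = (\<lambda>n. if n \<in> N then \<psi> (coact sN nu \<phi> n) else 0)"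

definition rank_one_map :: "'c set \<Rightarrow> ('c \<Rightarrow> 'k::field) \<Rightarrow> ('n \<Rightarrow> 'k) \<Rightarrow> 'c \<Rightarrow> 'n \<Rightarrow> 'k" where
  "rank_one_map C \<phi> \<psi> = (\<lambda>c. if c \<in> C then fscale (*) (\<phi> c) \<psi> else 0)"

lemma rank_one_map_lin_maps:
  assumes C: "is_space sC C" and N: "is_space sN N" and \<psi>: "\<psi> \<in> dual sN N"
    and \<phi>: "linear_on sC C (*) UNIV \<phi>"
  shows "rank_one_map C \<phi> \<psi> \<in> lin_maps sC C (fscale (*)) (dual sN N)"
  using is_space_scale[OF is_space_dual[OF N] \<psi>] \<phi>
  by (auto simp: lin_maps_def linear_on_def rank_one_map_def fscale_def fun_eq_iff algebra_simps
      is_space_add[OF C] is_space_scale[OF C])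

lemma dual_pi_rank_one_map:
  assumes R: "rcomod s Hom cmp idm sN N nu" and \<psi>: "\<psi> \<in> dual sN N"
  shows "dual_pi N nu (rank_one_map (CE s Hom) \<phi> \<psi>) = dual_coact sN N nu \<phi> \<psi>"
proof
  fix n
  show "dual_pi N nu (rank_one_map (CE s Hom) \<phi> \<psi>) n = dual_coact sN N nu \<phi> \<psi> n"
  proof (cases "n \<in> N")
    case True
    note nu = rcomod_coaction[OF R True]
    have "\<psi> (coact sN nu \<phi> n) = sum_list (map (\<lambda>(m, c). \<phi> c * \<psi> m) (nu n))"
      using \<psi> linear_on_coact[where nu = nu and n = n, OF _ rcomod_space[OF R] nu]
      unfolding mem_dual_iff by blast
    also have "\<dots> = sum_list (map (\<lambda>(m, c). rank_one_map (CE s Hom) \<phi> \<psi> c m) (nu n))"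
      using nu by (intro arg_cong[where f = sum_list]) (auto simp: rank_one_map_def fscale_def)
    finally show ?thesis using True by (simp add: dual_pi_def dual_coact_def)
  qed (simp add: dual_pi_def dual_coact_def)
qed

lemma dual_coact_mem_dual:
  assumes C: "is_space cscale (CE s Hom)" and R: "rcomod s Hom cmp idm sN N nu"
    and \<psi>: "\<psi> \<in> dual sN N" and \<phi>: "linear_on cscale (CE s Hom) (*) UNIV \<phi>"
  shows "dual_coact sN N nu \<phi> \<psi> \<in> dual sN N"
  using dual_pi_mem_dual[OF R rank_one_map_lin_maps[OF C rcomod_space[OF R] \<psi> \<phi>]]
  by (simp add: dual_pi_rank_one_map[OF R \<psi>])

lemma contra_hom_dual_coact:
  assumes C: "is_space cscale (CE s Hom)"
    and RM: "rcomod s Hom cmp idm sM M nuM" and RN: "rcomod s Hom cmp idm sN N nuN"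
    and F: "F \<in> contra_hom s Hom (fscale (*)) (dual sN N) (dual_pi N nuN) (fscale (*)) (dual sM M) (dual_pi M nuM)"
    and \<psi>: "\<psi> \<in> dual sN N" and \<phi>: "linear_on cscale (CE s Hom) (*) UNIV \<phi>"
  shows "F (dual_coact sN N nuN \<phi> \<psi>) = dual_coact sM M nuM \<phi> (F \<psi>)"
proof -
  have Fl: "linear_on (fscale (*)) (dual sN N) (fscale (*)) (dual sM M) F"
    using F by (simp add: contra_hom_def lin_maps_def)
  have "F (dual_coact sN N nuN \<phi> \<psi>) = F (dual_pi N nuN (rank_one_map (CE s Hom) \<phi> \<psi>))"
    by (simp add: dual_pi_rank_one_map[OF RN \<psi>])
  also have "\<dots> = dual_pi M nuM (F \<circ> rank_one_map (CE s Hom) \<phi> \<psi>)"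
    using F rank_one_map_lin_maps[OF C rcomod_space[OF RN] \<psi> \<phi>] by (simp add: contra_hom_def)
  also have "F \<circ> rank_one_map (CE s Hom) \<phi> \<psi> = rank_one_map (CE s Hom) \<phi> (F \<psi>)"
    using linear_on_scale[OF Fl \<psi>] linear_on_zero[OF Fl is_space_dual[OF rcomod_space[OF RN]]]
    by (auto simp: rank_one_map_def)
  also have "dual_pi M nuM (rank_one_map (CE s Hom) \<phi> (F \<psi>)) = dual_coact sM M nuM \<phi> (F \<psi>)"
    by (rule dual_pi_rank_one_map[OF RM linear_on_in[OF Fl \<psi>]])
  finally show ?thesis .
qed

lemma coact_counit_decomposition:
  assumes R: "rcomod s Hom cmp idm sM M nu" and m: "m \<in> M"
  obtains X where "finite X" "m = (\<Sum>x\<in>X. coact sM nu (ev_id idm x) m)"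
proof -
  interpret vector_space sM using is_space_vector_space[OF rcomod_space[OF R]] .
  note nu = rcomod_coaction[OF R m]
  have diag: "finite {x. c x x \<noteq> 0}" if "c \<in> CE s Hom" for c
  proof (rule finite_subset)
    show "{x. c x x \<noteq> 0} \<subseteq> fst ` {(x, y). c x y \<noteq> 0}" by force
  qed (use that in \<open>simp add: CE_def\<close>)
  define X where "X = (\<Union>(m', c)\<in>set (nu m). {x. c x x \<noteq> 0})"
  have X: "finite X" unfolding X_def using nu diag by auto
  have counit: "counit idm c = (\<Sum>x\<in>X. ev_id idm x c)" if "(m', c) \<in> set (nu m)" for m' c
    unfolding counit_def ev_id_def
    by (rule sum.mono_neutral_left) (use X that in \<open>auto simp: X_def\<close>)
  have "m = sum_list (map (\<lambda>(m', c). sM (counit idm c) m') (nu m))"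
    using rcomod_counit[OF R m] by (simp add: coact_def)
  also have "\<dots> = sum_list (map (\<lambda>(m', c). \<Sum>x\<in>X. sM (ev_id idm x c) m') (nu m))"
  proof (intro arg_cong[where f = sum_list] map_cong refl)
    fix p assume p: "p \<in> set (nu m)"
    obtain m' c where pc: "p = (m', c)" by fastforce
    show "(\<lambda>(m', c). sM (counit idm c) m') p = (\<lambda>(m', c). \<Sum>x\<in>X. sM (ev_id idm x c) m') p"
      using counit p unfolding pc by (simp add: scale_sum_left)
  qed
  also have "\<dots> = (\<Sum>x\<in>X. coact sM nu (ev_id idm x) m)"
  proof -
    have "sum_list (map (\<lambda>p. \<Sum>x\<in>X. g x p) xs) = (\<Sum>x\<in>X. sum_list (map (g x) xs))" for g xs
      by (induct xs) (simp_all add: sum.distrib)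
    then show ?thesis unfolding coact_def split_beta .
  qed
  finally show ?thesis using X that by blast
qed

lemma contra_hom_eval_decomposition:
  assumes C: "is_space cscale (CE s Hom)"
    and RM: "rcomod s Hom cmp idm sM M nuM" and RN: "rcomod s Hom cmp idm sN N nuN"
    and F: "F \<in> contra_hom s Hom (fscale (*)) (dual sN N) (dual_pi N nuN) (fscale (*)) (dual sM M) (dual_pi M nuM)"
    and m: "m \<in> M"
  obtains X where "finite X"
    "\<And>\<psi>. \<psi> \<in> dual sN N \<Longrightarrow> F \<psi> m = (\<Sum>x\<in>X. F (dual_coact sN N nuN (ev_id idm x) \<psi>) m)"
proof -
  have Fl: "linear_on (fscale (*)) (dual sN N) (fscale (*)) (dual sM M) F"
    using F by (simp add: contra_hom_def lin_maps_def)
  obtain X where X: "finite X" "m = (\<Sum>x\<in>X. coact sM nuM (ev_id idm x) m)"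
    using coact_counit_decomposition[OF RM m] .
  have "F \<psi> m = (\<Sum>x\<in>X. F (dual_coact sN N nuN (ev_id idm x) \<psi>) m)" if \<psi>: "\<psi> \<in> dual sN N" for \<psi>
  proof -
    have "linear_on sM M (*) UNIV (F \<psi>)" using linear_on_in[OF Fl \<psi>] by (simp add: mem_dual_iff)
    then have "F \<psi> m = (\<Sum>x\<in>X. F \<psi> (coact sM nuM (ev_id idm x) m))"
      using linear_on_sum_scale[of sM M "(*)" UNIV "F \<psi>" X "\<lambda>x. coact sM nuM (ev_id idm x) m" "\<lambda>_. 1"]
        rcomod_coact_mem[OF RM m] X(2) rcomod_space[OF RM]
      by (simp add: is_space_def vs_axioms_def)
    then show ?thesis
      using contra_hom_dual_coact[OF C RM RN F \<psi> ev_id_linear_on] m by (simp add: dual_coact_def)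
  qed
  then show ?thesis using that X(1) by blast
qed

lemma contra_hom_eval_representable:
  assumes C: "is_space cscale (CE s Hom)"
    and RM: "rcomod s Hom cmp idm sM M nuM" and LN: "lf_rcomod s Hom cmp idm sN N nuN"
    and F: "F \<in> contra_hom s Hom (fscale (*)) (dual sN N) (dual_pi N nuN) (fscale (*)) (dual sM M) (dual_pi M nuM)"
    and m: "m \<in> M"
  shows "\<exists>n\<in>N. \<forall>\<psi>\<in>dual sN N. F \<psi> m = \<psi> n"
proof -
  have RN: "rcomod s Hom cmp idm sN N nuN" using LN by (simp add: lf_rcomod_def)
  note N = rcomod_space[OF RN]
  let ?e = "\<lambda>x. ev_id idm x"
  obtain X where X: "finite X"
    and sum: "\<And>\<psi>. \<psi> \<in> dual sN N \<Longrightarrow> F \<psi> m = (\<Sum>x\<in>X. F (dual_coact sN N nuN (?e x) \<psi>) m)"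
    using contra_hom_eval_decomposition[OF C RM RN F m] by blast
  have "\<forall>x. \<exists>B. finite B \<and> B \<subseteq> coact sN nuN (?e x) ` N \<and> coact sN nuN (?e x) ` N = lin_span sN B"
    using LN by (simp add: lf_rcomod_def fin_dim_def)
  then obtain Bx where Bx: "\<And>x. finite (Bx x)" "\<And>x. Bx x \<subseteq> coact sN nuN (?e x) ` N"
    "\<And>x. coact sN nuN (?e x) ` N = lin_span sN (Bx x)"
    by metis
  have BxN: "Bx x \<subseteq> N" for x
    using Bx(2) rcomod_coact_mem[OF RN] by blast
  show ?thesis
  proof (rule dual_functional_is_evaluation[OF N])
    show "finite (\<Union>x\<in>X. Bx x)" using X Bx(1) by blast
    show "(\<Union>x\<in>X. Bx x) \<subseteq> N" using BxN by blast
    have "linear_on (fscale (*)) (dual sN N) (fscale (*)) (dual sM M) F"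
      using F by (simp add: contra_hom_def lin_maps_def)
    then show "linear_on (fscale (*)) (dual sN N) (*) UNIV (\<lambda>\<psi>. F \<psi> m)"
      by (simp add: linear_on_def fscale_def)
  next
    fix \<psi> \<psi>' assume \<psi>: "\<psi> \<in> dual sN N" "\<psi>' \<in> dual sN N" and agree: "\<forall>b\<in>\<Union>x\<in>X. Bx x. \<psi> b = \<psi>' b"
    have "\<psi> (coact sN nuN (?e x) n) = \<psi>' (coact sN nuN (?e x) n)" if "x \<in> X" "n \<in> N" for x n
      by (rule dual_eq_on_lin_span[OF N BxN \<psi>]) (use agree that Bx(3)[of x] in auto)
    then have "dual_coact sN N nuN (?e x) \<psi> = dual_coact sN N nuN (?e x) \<psi>'" if "x \<in> X" for x
      using that by (auto simp: dual_coact_def)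
    then show "F \<psi> m = F \<psi>' m" using sum \<psi> by simp
  qed
qed

lemma lin_maps_if_transpose:
  assumes M: "is_space sM M" and N: "is_space sN N"
    and F: "F \<in> lin_maps (fscale (*)) (dual sN N) (fscale (*)) (dual sM M)"
    and fN: "\<And>m. m \<in> M \<Longrightarrow> f m \<in> N" and f0: "\<And>m. m \<notin> M \<Longrightarrow> f m = 0"
    and Ff: "\<And>m \<psi>. m \<in> M \<Longrightarrow> \<psi> \<in> dual sN N \<Longrightarrow> F \<psi> m = \<psi> (f m)"
  shows "f \<in> lin_maps sM M sN N" and "dualmap sN N M f = F"
proof -
  have Fl: "linear_on (fscale (*)) (dual sN N) (fscale (*)) (dual sM M) F"
    and F0: "\<And>\<psi>. \<psi> \<notin> dual sN N \<Longrightarrow> F \<psi> = 0"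
    using F by (simp_all add: lin_maps_def)
  have lin: "linear_on sM M (*) UNIV (F \<psi>)" "\<forall>m. m \<notin> M \<longrightarrow> F \<psi> m = 0"
    if "\<psi> \<in> dual sN N" for \<psi>
    using linear_on_in[OF Fl that] by (simp_all add: mem_dual_iff)
  have "f (x + y) = f x + f y" if "x \<in> M" "y \<in> M" for x y
  proof (rule dual_eq_imp_eq[OF N])
    show "f (x + y) \<in> N" "f x + f y \<in> N"
      using that fN is_space_add[OF M] is_space_add[OF N] by simp_all
    fix \<psi> assume \<psi>: "\<psi> \<in> dual sN N"
    then show "\<psi> (f (x + y)) = \<psi> (f x + f y)"
      using that fN Ff[symmetric] linear_on_add[OF lin(1)[OF \<psi>]] is_space_add[OF M]
        linear_on_add[of sN N "(*)" UNIV \<psi>] by (simp add: mem_dual_iff)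
  qed
  moreover have "f (sM a x) = sN a (f x)" if "x \<in> M" for a x
  proof (rule dual_eq_imp_eq[OF N])
    show "f (sM a x) \<in> N" "sN a (f x) \<in> N"
      using that fN is_space_scale[OF M] is_space_scale[OF N] by simp_all
    fix \<psi> assume \<psi>: "\<psi> \<in> dual sN N"
    then show "\<psi> (f (sM a x)) = \<psi> (sN a (f x))"
      using that fN Ff[symmetric] linear_on_scale[OF lin(1)[OF \<psi>]] is_space_scale[OF M]
        linear_on_scale[of sN N "(*)" UNIV \<psi>] by (simp add: mem_dual_iff)
  qed
  ultimately show "f \<in> lin_maps sM M sN N"
    using fN f0 by (simp add: lin_maps_def linear_on_def)
  show "dualmap sN N M f = F"
    using lin(2) Ff F0 by (auto simp: dualmap_def fun_eq_iff)
qed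

lemma comod_hom_if_transpose:
  assumes C: "is_space cscale (CE s Hom)"
    and RM: "rcomod s Hom cmp idm sM M nuM" and RN: "rcomod s Hom cmp idm sN N nuN"
    and F: "F \<in> contra_hom s Hom (fscale (*)) (dual sN N) (dual_pi N nuN) (fscale (*)) (dual sM M) (dual_pi M nuM)"
    and f: "f \<in> lin_maps sM M sN N"
    and Ff: "\<And>m \<psi>. m \<in> M \<Longrightarrow> \<psi> \<in> dual sN N \<Longrightarrow> F \<psi> m = \<psi> (f m)"
  shows "f \<in> comod_hom s Hom sM M nuM sN N nuN"
proof -
  have fl: "linear_on sM M sN N f" using f by (simp add: lin_maps_def)
  have "teq2 sN N cscale (CE s Hom) (nuN (f m)) (map (\<lambda>(m', c). (f m', c)) (nuM m))"
    if m: "m \<in> M" for m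
  proof (rule teq2_if_pairings_eq[OF rcomod_space[OF RN] C])
    have fm: "f m \<in> N" by (rule linear_on_in[OF fl m])
    show "set (nuN (f m)) \<subseteq> N \<times> CE s Hom" by (rule rcomod_coaction[OF RN fm])
    show "set (map (\<lambda>(m', c). (f m', c)) (nuM m)) \<subseteq> N \<times> CE s Hom"
      using rcomod_coaction[OF RM m] linear_on_in[OF fl] by auto
    fix \<psi> \<phi> assume \<psi>: "\<psi> \<in> dual sN N" and \<phi>: "\<phi> \<in> dual cscale (CE s Hom)"
    have \<psi>l: "linear_on sN N (*) UNIV \<psi>" and \<phi>l: "linear_on cscale (CE s Hom) (*) UNIV \<phi>"
      using \<psi> \<phi> by (simp_all add: mem_dual_iff)
    have "sum_list (map (\<lambda>(x, y). \<psi> x * \<phi> y) (nuN (f m))) = \<psi> (coact sN nuN \<phi> (f m))"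
      using linear_on_coact[where nu = nuN and n = "f m", OF \<psi>l rcomod_space[OF RN] rcomod_coaction[OF RN fm]]
      by (simp add: split_beta mult.commute)
    also have "\<dots> = F (dual_coact sN N nuN \<phi> \<psi>) m"
      using Ff[OF m dual_coact_mem_dual[OF C RN \<psi> \<phi>l]] fm by (simp add: dual_coact_def)
    also have "\<dots> = \<psi> (f (coact sM nuM \<phi> m))"
      using contra_hom_dual_coact[OF C RM RN F \<psi> \<phi>l] Ff[OF rcomod_coact_mem[OF RM m] \<psi>] m
      by (simp add: dual_coact_def)
    also have "\<dots> = sum_list (map (\<lambda>(m', c). \<phi> c * \<psi> (f m')) (nuM m))"
      using linear_on_coact[where nu = nuM and n = m and \<phi> = \<phi>, OF linear_on_comp[OF fl \<psi>l]
          rcomod_space[OF RM] rcomod_coaction[OF RM m]]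
      by (simp add: comp_def)
    also have "\<dots> = sum_list (map (\<lambda>(x, y). \<psi> x * \<phi> y) (map (\<lambda>(m', c). (f m', c)) (nuM m)))"
      by (simp add: comp_def split_def mult.commute)
    finally show "sum_list (map (\<lambda>(x, y). \<psi> x * \<phi> y) (nuN (f m)))
        = sum_list (map (\<lambda>(x, y). \<psi> x * \<phi> y) (map (\<lambda>(m', c). (f m', c)) (nuM m)))" .
  qed
  then show ?thesis using f by (simp add: comod_hom_def)
qed

lemma contra_hom_subset_dualmap_image:
  assumes C: "is_space cscale (CE s Hom)"
    and RM: "rcomod s Hom cmp idm sM M nuM" and LN: "lf_rcomod s Hom cmp idm sN N nuN"
  shows "contra_hom s Hom (fscale (*)) (dual sN N) (dual_pi N nuN) (fscale (*)) (dual sM M) (dual_pi M nuM)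
    \<subseteq> dualmap sN N M ` comod_hom s Hom sM M nuM sN N nuN"
proof
  fix F
  assume F: "F \<in> contra_hom s Hom (fscale (*)) (dual sN N) (dual_pi N nuN) (fscale (*)) (dual sM M) (dual_pi M nuM)"
  have RN: "rcomod s Hom cmp idm sN N nuN" using LN by (simp add: lf_rcomod_def)
  have "\<forall>m\<in>M. \<exists>n. n \<in> N \<and> (\<forall>\<psi>\<in>dual sN N. F \<psi> m = \<psi> n)"
    using contra_hom_eval_representable[OF C RM LN F] by blast
  then obtain f0 where f0: "\<forall>m\<in>M. f0 m \<in> N \<and> (\<forall>\<psi>\<in>dual sN N. F \<psi> m = \<psi> (f0 m))"
    by (rule bchoice[THEN exE])
  define f where "f m = (if m \<in> M then f0 m else 0)" for m
  have F_lin: "F \<in> lin_maps (fscale (*)) (dual sN N) (fscale (*)) (dual sM M)"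
    using F by (simp add: contra_hom_def)
  note transpose = lin_maps_if_transpose[OF rcomod_space[OF RM] rcomod_space[OF RN] F_lin, of f]
  have "f \<in> comod_hom s Hom sM M nuM sN N nuN"
    using comod_hom_if_transpose[OF C RM RN F transpose(1)] f0 by (simp_all add: f_def)
  moreover have "dualmap sN N M f = F" using transpose(2) f0 by (simp add: f_def)
  ultimately show "F \<in> dualmap sN N M ` comod_hom s Hom sM M nuM sN N nuN" by blast
qed

theorem proposition5p1:
  fixes s :: "'k::field \<Rightarrow> 'h::ab_group_add \<Rightarrow> 'h"
    and Hom :: "'o \<Rightarrow> 'o \<Rightarrow> 'h set"
    and cmp :: "'o \<Rightarrow> 'o \<Rightarrow> 'o \<Rightarrow> 'h \<Rightarrow> 'h \<Rightarrow> 'h"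
    and idm :: "'o \<Rightarrow> 'h"
    and sM :: "'k \<Rightarrow> 'm::ab_group_add \<Rightarrow> 'm" and M :: "'m set"
    and nuM :: "'m \<Rightarrow> ('m \<times> ('o \<Rightarrow> 'o \<Rightarrow> 'h \<Rightarrow> 'k)) list"
    and sN :: "'k \<Rightarrow> 'n::ab_group_add \<Rightarrow> 'n" and N :: "'n set"
    and nuN :: "'n \<Rightarrow> ('n \<times> ('o \<Rightarrow> 'o \<Rightarrow> 'h \<Rightarrow> 'k)) list"
  assumes "klin_cat s Hom cmp idm"
    and "loc_fin_cat s Hom"
    and "lf_rcomod s Hom cmp idm sM M nuM"
    and "lf_rcomod s Hom cmp idm sN N nuN"
  shows "bij_betw (dualmap sN N M)
           (comod_hom s Hom sM M nuM sN N nuN)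
           (contra_hom s Hom (fscale (*)) (dual sN N) (dual_pi N nuN)
                             (fscale (*)) (dual sM M) (dual_pi M nuM))"
proof -
  have C: "is_space cscale (CE s Hom)"
    using assms(1) by (intro is_space_CE) (simp add: klin_cat_def)
  have RM: "rcomod s Hom cmp idm sM M nuM" and RN: "rcomod s Hom cmp idm sN N nuN"
    using assms(3,4) by (simp_all add: lf_rcomod_def)
  have "inj_on (dualmap sN N M) (comod_hom s Hom sM M nuM sN N nuN)"
    using dualmap_inj_on[OF rcomod_space[OF RN]] by (rule inj_on_subset) (auto simp: comod_hom_def)
  moreover have "dualmap sN N M ` comod_hom s Hom sM M nuM sN N nuN
      \<subseteq> contra_hom s Hom (fscale (*)) (dual sN N) (dual_pi N nuN) (fscale (*)) (dual sM M) (dual_pi M nuM)"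
    using dualmap_mem_contra_hom[OF RM RN] by blast
  ultimately show ?thesis
    unfolding bij_betw_def using contra_hom_subset_dualmap_image[OF C RM assms(4)] by blast
qed

end
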